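(* Let $\mathcal{M}$ be a matroid with set of bases $\mathcal{B}$. Then $\mathcal{M}$ is binary if and only if $\Delta_{\{B_1,B_2\}}\neq 3$ for every $B_1,B_2\in\mathcal{B}$.
   Context: A matroid is binary if it is representable over the field with two elements. For bases $B_1,B_2$ of $\mathcal{M}$, $\Delta_{\{B_1,B_2\}}$ is the number of unordered pairs $\{D_1,D_2\}$ with $D_1,D_2\in\mathcal{B}$ such that $D_1\cup D_2=B_1\cup B_2$ as multisets. *)

theory Defs
  imports Main "HOL-Library.Multiset" "HOL-Library.Z2"
begin

definition matroid_bases :: "'a set \<Rightarrow> 'a set set \<Rightarrow> bool" where
  "matroid_bases E \<B> \<longleftrightarrow> finite E \<and> \<B> \<noteq> {} \<and> (\<forall>B\<in>\<B>. B \<subseteq> E) \<and>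
     (\<forall>B1\<in>\<B>. \<forall>B2\<in>\<B>. \<forall>x\<in>B1 - B2. \<exists>y\<in>B2 - B1. insert y (B1 - {x}) \<in> \<B>)"

definition indep :: "'a set set \<Rightarrow> 'a set \<Rightarrow> bool" where
  "indep \<B> S \<longleftrightarrow> (\<exists>B\<in>\<B>. S \<subseteq> B)"

definition lin_indep_cols :: "('a \<Rightarrow> nat \<Rightarrow> 'f::comm_ring_1) \<Rightarrow> 'a set \<Rightarrow> bool" where
  "lin_indep_cols v S \<longleftrightarrow>
     (\<forall>c. (\<forall>i. (\<Sum>e\<in>S. c e * v e i) = 0) \<longrightarrow> (\<forall>e\<in>S. c e = 0))"

definition representable_over :: "'f::comm_ring_1 itself \<Rightarrow> 'a set \<Rightarrow> 'a set set \<Rightarrow> bool" where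
  "representable_over _ E \<B> \<longleftrightarrow>
     (\<exists>(m::nat) (v :: 'a \<Rightarrow> nat \<Rightarrow> 'f).
        (\<forall>e i. m \<le> i \<longrightarrow> v e i = 0) \<and>
        (\<forall>S. S \<subseteq> E \<longrightarrow> (indep \<B> S \<longleftrightarrow> lin_indep_cols v S)))"

text \<open>Binary: representable over GF(2), which is the type bit of HOL-Library.Z2.\<close>
definition binary_matroid :: "'a set \<Rightarrow> 'a set set \<Rightarrow> bool" where
  "binary_matroid E \<B> \<longleftrightarrow> representable_over TYPE(bit) E \<B>"

definition Delta :: "'a set set \<Rightarrow> 'a set \<Rightarrow> 'a set \<Rightarrow> nat" where
  "Delta \<B> B1 B2 = card {{D1, D2} | D1 D2. D1 \<in> \<B> \<and> D2 \<in> \<B> \<and>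
      mset_set D1 + mset_set D2 = mset_set B1 + mset_set B2}"

end

theory Submission
  imports Defs "HOL-Library.Function_Algebras" "HOL.Vector_Spaces"
begin

(* Let v represent M over GF(2) and let B1, B2 be bases with C = B1 \<inter> B2, G = (B1 \<union> B2) - C
   and p0 \<in> B1 - B2. Then Delta counts the sets Z \<subseteq> G containing p0 for which the columns of
   C \<union> Z and of C \<union> (G - Z) are both independent. Modulo 2 this count is additive in every
   column of B2 - B1: with all other columns fixed, independence of a full-rank set is a linear
   condition on the remaining column. So it suffices to count when each column of B2 - B1 repeats
   a column of B1, and then swapping the two elements that carry the column of a second point
   p1 \<in> B1 - B2 is a fixed-point-free involution. Hence Delta is 1 if B1 and B2 differ in at
   most one element and even otherwise.

   Conversely, fix a base B and give e the incidence vector of its fundamental circuit with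
   respect to B as column. A set S of the right size is a base iff these columns are independent,
   by induction on card (S - B): moving from B to a base B' one exchange closer to S changes the
   matrix by the GF(2) pivot rule, which reproduces the fundamental matrix of B' by induction when
   card (S - B) \<ge> 3. For card (S - B) = 2 the claim is that S is a base iff a 2 x 2 minor is
   nonsingular; basis exchange decides this except when all four entries are 1, and then S being
   a base would make Delta equal to 3. *)

section \<open>Column vectors over GF(2)\<close>

definition scale_bit :: "bit \<Rightarrow> ('i \<Rightarrow> bit) \<Rightarrow> ('i \<Rightarrow> bit)" where
  "scale_bit c f = (\<lambda>i. c * f i)"

interpretation F2: vector_space "scale_bit :: bit \<Rightarrow> ('i \<Rightarrow> bit) \<Rightarrow> ('i \<Rightarrow> bit)"
  by unfold_locales (auto simp: scale_bit_def fun_eq_iff algebra_simps)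

declare add_bit_eq_xor [simp del] mult_bit_eq_and [simp del]

lemma bit_add_self [simp]: "(x :: bit) + x = 0"
  by (cases x) auto

lemma fun_add_self_bit [simp]: "(f :: 'i \<Rightarrow> bit) + f = 0"
  by (simp add: fun_eq_iff)

lemma fun_diff_eq_add: "(f :: 'i \<Rightarrow> bit) - g = f + g"
  by (simp add: fun_eq_iff)

lemma sum_fun_apply: "(sum f S) i = (\<Sum>x\<in>S. f x i)"
proof (cases "finite S")
  case True then show ?thesis by (induction S rule: finite_induct) auto
qed auto

definition indep_cols :: "('a \<Rightarrow> 'i \<Rightarrow> bit) \<Rightarrow> 'a set \<Rightarrow> bool" where
  "indep_cols v S \<longleftrightarrow> (\<forall>c. (\<forall>i. (\<Sum>e\<in>S. c e * v e i) = 0) \<longrightarrow> (\<forall>e\<in>S. c e = 0))"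

lemma lin_indep_cols_iff_indep_cols: "lin_indep_cols v S = indep_cols v S"
  by (simp add: lin_indep_cols_def indep_cols_def)

lemma sum_scale_bit_apply: "(\<Sum>e\<in>S. scale_bit (c e) (v e)) i = (\<Sum>e\<in>S. c e * v e i)"
  by (simp add: sum_fun_apply scale_bit_def)

lemma indep_cols_iff_sum_eq_0:
  "indep_cols v S \<longleftrightarrow> (\<forall>c. (\<Sum>e\<in>S. scale_bit (c e) (v e)) = 0 \<longrightarrow> (\<forall>e\<in>S. c e = 0))"
  unfolding indep_cols_def by (simp add: fun_eq_iff sum_scale_bit_apply)

lemma indep_cols_iff_independent:
  assumes "finite S"
  shows "indep_cols v S \<longleftrightarrow> inj_on v S \<and> F2.independent (v ` S)"
proof
  assume L: "indep_cols v S"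
  have inj: "inj_on v S"
  proof (rule inj_onI, rule ccontr)
    fix a b assume ab: "a \<in> S" "b \<in> S" "v a = v b" "a \<noteq> b"
    let ?c = "\<lambda>e. if e = a \<or> e = b then (1::bit) else 0"
    have "(\<Sum>e\<in>S. scale_bit (?c e) (v e)) = (\<Sum>e\<in>{a,b}. scale_bit (?c e) (v e))"
      using ab assms by (intro sum.mono_neutral_right) (auto simp: scale_bit_def fun_eq_iff)
    also have "\<dots> = 0" using ab by (simp add: scale_bit_def fun_eq_iff)
    finally have "\<forall>e\<in>S. ?c e = 0" using spec[OF L[unfolded indep_cols_iff_sum_eq_0], of ?c] by blast
    then have "?c a = 0" using ab by blast
    then show False by simp
  qed
  have "\<not> F2.dependent (v ` S)"
  proof
    assume "F2.dependent (v ` S)"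
    then obtain u where u: "\<exists>x\<in>v`S. u x \<noteq> 0" "(\<Sum>x\<in>v`S. scale_bit (u x) x) = 0"
      using F2.dependent_finite[of "v`S"] assms by auto
    have "(\<Sum>e\<in>S. scale_bit (u (v e)) (v e)) = 0"
      using u(2) sum.reindex[OF inj, of "\<lambda>x. scale_bit (u x) x"] by simp
    then have "\<forall>e\<in>S. u (v e) = 0"
      using spec[OF L[unfolded indep_cols_iff_sum_eq_0], of "\<lambda>e. u (v e)"] by blast
    with u(1) show False by auto
  qed
  with inj show "inj_on v S \<and> F2.independent (v ` S)" by simp
next
  assume R: "inj_on v S \<and> F2.independent (v ` S)"
  show "indep_cols v S" unfolding indep_cols_iff_sum_eq_0
  proof (intro allI impI ballI)
    fix c e assume s: "(\<Sum>e\<in>S. scale_bit (c e) (v e)) = 0" and e: "e \<in> S"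
    let ?u = "\<lambda>x. c (the_inv_into S v x)"
    have "(\<Sum>x\<in>v`S. scale_bit (?u x) x) = (\<Sum>e\<in>S. scale_bit (?u (v e)) (v e))"
      using sum.reindex[of v S "\<lambda>x. scale_bit (?u x) x"] R by simp
    also have "\<dots> = (\<Sum>e\<in>S. scale_bit (c e) (v e))"
      using R by (intro sum.cong) (auto simp: the_inv_into_f_f)
    finally have "(\<Sum>x\<in>v`S. scale_bit (?u x) x) = 0" using s by simp
    then have "\<forall>x\<in>v`S. ?u x = 0"
      using F2.dependent_finite[of "v`S"] assms R by auto
    then show "c e = 0" using e R by (auto simp: the_inv_into_f_f)
  qed
qed

lemma indep_cols_subset:
  assumes "indep_cols v S" "T \<subseteq> S" "finite S"
  shows "indep_cols v T"
  unfolding indep_cols_def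
proof (intro allI impI ballI)
  fix c e assume h: "\<forall>i. (\<Sum>e\<in>T. c e * v e i) = 0" and e: "e \<in> T"
  let ?c = "\<lambda>x. if x \<in> T then c x else 0"
  have "\<forall>i. (\<Sum>e\<in>S. ?c e * v e i) = 0"
  proof
    fix i
    have "(\<Sum>e\<in>S. ?c e * v e i) = (\<Sum>e\<in>T. ?c e * v e i)"
      using assms by (intro sum.mono_neutral_right) auto
    then show "(\<Sum>e\<in>S. ?c e * v e i) = 0" using h by simp
  qed
  then have "\<forall>e\<in>S. ?c e = 0" using spec[OF assms(1)[unfolded indep_cols_def], of ?c] by blast
  then have "?c e = 0" using assms e by blast
  then show "c e = 0" using e by simp
qed

lemma indep_cols_cong: "(\<And>e. e \<in> S \<Longrightarrow> v e = w e) \<Longrightarrow> indep_cols v S = indep_cols w S"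
  unfolding indep_cols_def by (metis (no_types, lifting) sum.cong)

lemma indep_cols_insert:
  assumes "finite S" "x \<notin> S"
  shows "indep_cols v (insert x S) \<longleftrightarrow> indep_cols v S \<and> v x \<notin> F2.span (v ` S)"
proof -
  have fin: "finite (insert x S)" using assms by simp
  show ?thesis
  proof
    assume L: "indep_cols v (insert x S)"
    then have "indep_cols v S" using indep_cols_subset fin by blast
    moreover have "v x \<notin> F2.span (v ` S)"
    proof
      assume sp: "v x \<in> F2.span (v ` S)"
      from L fin have i: "inj_on v (insert x S)" "F2.independent (v ` insert x S)"
        by (auto simp: indep_cols_iff_independent)
      have "v x \<notin> v ` S" using i(1) assms(2) by (auto simp: inj_on_def)
      then have "v x \<in> F2.span (v ` insert x S - {v x})" using sp by simp
      then have "F2.dependent (v ` insert x S)" unfolding F2.dependent_def by blast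
      with i show False by simp
    qed
    ultimately show "indep_cols v S \<and> v x \<notin> F2.span (v ` S)" by simp
  next
    assume R: "indep_cols v S \<and> v x \<notin> F2.span (v ` S)"
    then have i: "inj_on v S" "F2.independent (v ` S)" using assms by (auto simp: indep_cols_iff_independent)
    have nx: "v x \<notin> v ` S" using R F2.span_base by blast
    have "F2.independent (insert (v x) (v ` S))" using F2.independent_insertI R i by blast
    moreover have "inj_on v (insert x S)" using i nx by auto
    ultimately show "indep_cols v (insert x S)" using fin by (simp add: indep_cols_iff_independent)
  qed
qed

lemma indep_cols_card_le:
  assumes "finite S" "finite T" "indep_cols v S" "\<forall>e\<in>S. v e \<in> F2.span (w ` T)"
  shows "card S \<le> card T"
proof -
  have i: "inj_on v S" "F2.independent (v ` S)" using assms by (auto simp: indep_cols_iff_independent)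
  have "card (v ` S) \<le> card (w ` T)"
    using F2.independent_span_bound[of "w ` T" "v ` S"] assms i by auto
  also have "\<dots> \<le> card T" by (rule card_image_le[OF assms(2)])
  finally show ?thesis using card_image[OF i(1)] by simp
qed

lemma indep_cols_reindex:
  assumes "inj_on h S" "finite S"
  shows "indep_cols (\<lambda>e. v (h e)) S \<longleftrightarrow> indep_cols v (h ` S)"
proof -
  have "inj_on (\<lambda>e. v (h e)) S \<longleftrightarrow> inj_on v (h ` S)"
    using comp_inj_on_iff[OF assms(1), of v] by (simp add: o_def)
  moreover have "(\<lambda>e. v (h e)) ` S = v ` (h ` S)" by auto
  ultimately show ?thesis using assms by (simp add: indep_cols_iff_independent)
qed

lemma in_span_image_iff:
  assumes "finite T"
  shows "x \<in> F2.span (w ` T) \<longleftrightarrow> (\<exists>c. x = (\<Sum>t\<in>T. scale_bit (c t) (w t)))"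
proof
  assume "x \<in> F2.span (w ` T)"
  then show "\<exists>c. x = (\<Sum>t\<in>T. scale_bit (c t) (w t))"
  proof (induction rule: F2.span_induct_alt)
    case base
    show ?case by (rule exI[of _ "\<lambda>_. 0"]) (simp add: scale_bit_def fun_eq_iff sum_fun_apply)
  next
    case (step c x y)
    then obtain d where d: "y = (\<Sum>t\<in>T. scale_bit (d t) (w t))" by blast
    from step obtain t0 where t0: "t0 \<in> T" "x = w t0" by blast
    let ?d = "d(t0 := d t0 + c)"
    have "(\<Sum>t\<in>T. scale_bit (?d t) (w t)) =
        scale_bit (?d t0) (w t0) + (\<Sum>t\<in>T-{t0}. scale_bit (?d t) (w t))"
      using t0 assms by (simp add: sum.remove)
    also have "(\<Sum>t\<in>T-{t0}. scale_bit (?d t) (w t)) = (\<Sum>t\<in>T-{t0}. scale_bit (d t) (w t))"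
      by (intro sum.cong) auto
    also have "scale_bit (?d t0) (w t0) = scale_bit c x + scale_bit (d t0) (w t0)"
      unfolding t0(2) scale_bit_def
      by (rule ext) (simp only: fun_upd_same distrib_right add.commute plus_fun_apply)
    also have "scale_bit c x + scale_bit (d t0) (w t0) + (\<Sum>t\<in>T-{t0}. scale_bit (d t) (w t)) =
        scale_bit c x + y"
      using d t0 assms by (simp add: sum.remove add.assoc)
    finally show ?case by metis
  qed
next
  assume "\<exists>c. x = (\<Sum>t\<in>T. scale_bit (c t) (w t))"
  then obtain c where "x = (\<Sum>t\<in>T. scale_bit (c t) (w t))" by blast
  then show "x \<in> F2.span (w ` T)"
    by (simp add: F2.span_sum F2.span_scale F2.span_base)
qed

definition unit_vec :: "'i \<Rightarrow> 'i \<Rightarrow> bit" where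
  "unit_vec b = (\<lambda>i. if i = b then 1 else 0)"

lemma scale_bit_sum_left: "scale_bit (\<Sum>x\<in>A. f x) v = (\<Sum>x\<in>A. scale_bit (f x) v)"
  by (simp add: scale_bit_def fun_eq_iff sum_fun_apply sum_distrib_right)

lemma scale_bit_sum_right: "scale_bit c (\<Sum>x\<in>A. f x) = (\<Sum>x\<in>A. scale_bit c (f x))"
  by (simp add: scale_bit_def fun_eq_iff sum_fun_apply sum_distrib_left)

lemma scale_bit_scale_bit: "scale_bit a (scale_bit b v) = scale_bit (a * b) v"
  by (simp add: scale_bit_def fun_eq_iff mult.assoc)

lemma sum_unit_vecs:
  "finite T \<Longrightarrow> (\<forall>i. i \<notin> T \<longrightarrow> f i = 0) \<Longrightarrow> f = (\<Sum>t\<in>T. scale_bit (f t) (unit_vec t))"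
  by (auto simp: fun_eq_iff sum_fun_apply scale_bit_def unit_vec_def if_distrib cong: if_cong)

lemma span_unit_vecs:
  assumes "finite T"
  shows "F2.span (unit_vec ` T) = {f. \<forall>i. i \<notin> T \<longrightarrow> f i = 0}"
proof
  have "F2.subspace {f::'a\<Rightarrow>bit. \<forall>i. i \<notin> T \<longrightarrow> f i = 0}"
    unfolding F2.subspace_def by (auto simp: scale_bit_def)
  moreover have "unit_vec ` T \<subseteq> {f. \<forall>i. i \<notin> T \<longrightarrow> f i = 0}"
    by (auto simp: unit_vec_def)
  ultimately show "F2.span (unit_vec ` T) \<subseteq> {f. \<forall>i. i \<notin> T \<longrightarrow> f i = 0}"
    by (rule F2.span_minimal[rotated])
next
  show "{f. \<forall>i. i \<notin> T \<longrightarrow> f i = 0} \<subseteq> F2.span (unit_vec ` T)"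
  proof
    fix f :: "'a \<Rightarrow> bit" assume "f \<in> {f. \<forall>i. i \<notin> T \<longrightarrow> f i = 0}"
    then have "f = (\<Sum>t\<in>T. scale_bit (f t) (unit_vec t))" using sum_unit_vecs assms by blast
    then show "f \<in> F2.span (unit_vec ` T)" using in_span_image_iff[OF assms] by blast
  qed
qed

lemma indep_cols_unit_vecs:
  assumes "\<forall>b\<in>T. w b = unit_vec b" "finite T"
  shows "indep_cols w T"
  unfolding indep_cols_def
proof (intro allI impI ballI)
  fix c e assume h: "\<forall>i. (\<Sum>e\<in>T. c e * w e i) = 0" and e: "e \<in> T"
  have "(\<Sum>x\<in>T. c x * w x e) = (\<Sum>x\<in>T. if x = e then c x else 0)"
    using assms by (intro sum.cong) (auto simp: unit_vec_def)
  also have "\<dots> = c e" using e assms by simp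
  finally show "c e = 0" using h by metis
qed

lemma indep_cols_exchange_unit_vec:
  assumes "finite B" "x \<in> B" "y \<notin> B"
    and "\<forall>b\<in>B. g b = unit_vec b" "\<forall>i. i \<notin> B \<longrightarrow> g y i = 0"
  shows "indep_cols g (insert y (B - {x})) \<longleftrightarrow> g y x \<noteq> 0"
proof -
  have fin: "finite (B - {x})" using assms by simp
  have "indep_cols g (B - {x})" using indep_cols_unit_vecs[of "B - {x}" g] assms by auto
  moreover have "g ` (B - {x}) = unit_vec ` (B - {x})" using assms by auto
  ultimately have "indep_cols g (insert y (B - {x})) \<longleftrightarrow> g y \<notin> F2.span (unit_vec ` (B - {x}))"
    using indep_cols_insert[OF fin, of y g] assms by auto
  also have "\<dots> \<longleftrightarrow> g y x \<noteq> 0" using span_unit_vecs[OF fin] assms by auto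
  finally show ?thesis .
qed

lemma coeffs_unique:
  assumes "indep_cols w T" "finite T"
    and "(\<Sum>t\<in>T. scale_bit (c t) (w t)) = (\<Sum>t\<in>T. scale_bit (d t) (w t))"
  shows "\<forall>t\<in>T. c t = d t"
proof -
  have "(\<Sum>t\<in>T. scale_bit (c t + d t) (w t)) =
      (\<Sum>t\<in>T. scale_bit (c t) (w t)) + (\<Sum>t\<in>T. scale_bit (d t) (w t))"
    by (simp add: sum.distrib[symmetric] scale_bit_def fun_eq_iff distrib_right sum_fun_apply)
  also have "\<dots> = 0" using assms(3) by simp
  finally have "\<forall>t\<in>T. c t + d t = 0"
    using spec[OF assms(1)[unfolded indep_cols_iff_sum_eq_0], of "\<lambda>t. c t + d t"] by blast
  then show ?thesis by (metis add_diff_cancel_left' add.right_neutral minus_bit_def)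
qed

lemma indep_cols_change_coords:
  assumes "indep_cols w B2" "finite B2" "finite S"
    and supp: "\<forall>e\<in>S. \<forall>b. b \<notin> B2 \<longrightarrow> g e b = 0"
    and rep: "\<forall>e\<in>S. w e = (\<Sum>b\<in>B2. scale_bit (g e b) (w b))"
  shows "indep_cols w S \<longleftrightarrow> indep_cols g S"
proof -
  have key: "(\<Sum>e\<in>S. scale_bit (c e) (w e)) = (\<Sum>b\<in>B2. scale_bit (\<Sum>e\<in>S. c e * g e b) (w b))" for c
  proof -
    have "(\<Sum>e\<in>S. scale_bit (c e) (w e)) = (\<Sum>e\<in>S. \<Sum>b\<in>B2. scale_bit (c e * g e b) (w b))"
      using rep by (intro sum.cong) (auto simp: scale_bit_sum_right scale_bit_scale_bit)
    also have "\<dots> = (\<Sum>b\<in>B2. \<Sum>e\<in>S. scale_bit (c e * g e b) (w b))" by (rule sum.swap)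
    also have "\<dots> = (\<Sum>b\<in>B2. scale_bit (\<Sum>e\<in>S. c e * g e b) (w b))" by (simp add: scale_bit_sum_left)
    finally show ?thesis .
  qed
  have eq: "(\<Sum>e\<in>S. scale_bit (c e) (w e)) = 0 \<longleftrightarrow> (\<Sum>e\<in>S. scale_bit (c e) (g e)) = 0" for c
  proof -
    have "(\<Sum>e\<in>S. scale_bit (c e) (w e)) = 0 \<longleftrightarrow> (\<forall>b\<in>B2. (\<Sum>e\<in>S. c e * g e b) = 0)"
    proof
      assume "(\<Sum>e\<in>S. scale_bit (c e) (w e)) = 0"
      then have "(\<Sum>b\<in>B2. scale_bit (\<Sum>e\<in>S. c e * g e b) (w b)) = (\<Sum>b\<in>B2. scale_bit 0 (w b))"
        using key by (simp add: scale_bit_def fun_eq_iff sum_fun_apply)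
      then show "\<forall>b\<in>B2. (\<Sum>e\<in>S. c e * g e b) = 0"
        using coeffs_unique[OF assms(1,2), of "\<lambda>b. \<Sum>e\<in>S. c e * g e b" "\<lambda>b. 0"] by blast
    next
      assume "\<forall>b\<in>B2. (\<Sum>e\<in>S. c e * g e b) = 0"
      then show "(\<Sum>e\<in>S. scale_bit (c e) (w e)) = 0"
        using key by (simp add: scale_bit_def fun_eq_iff sum_fun_apply)
    qed
    also have "\<dots> \<longleftrightarrow> (\<forall>i. (\<Sum>e\<in>S. c e * g e i) = 0)"
      using supp by auto
    also have "\<dots> \<longleftrightarrow> (\<Sum>e\<in>S. scale_bit (c e) (g e)) = 0"
      by (simp add: fun_eq_iff sum_scale_bit_apply)
    finally show ?thesis .
  qed
  show ?thesis unfolding indep_cols_iff_sum_eq_0 using eq by simp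
qed

lemma indep_cols_extend:
  assumes fin: "finite B" "finite S" and units: "\<forall>b\<in>B. w b = unit_vec b"
    and outside: "\<forall>e i. i \<notin> B \<longrightarrow> w e i = 0" and indep: "indep_cols w S"
  shows "\<exists>S'. S \<subseteq> S' \<and> S' \<subseteq> S \<union> B \<and> card S' = card B \<and> indep_cols w S'"
  using fin(2) indep
proof (induction "card B - card S" arbitrary: S rule: less_induct)
  case less
  have "w ` B = unit_vec ` B" using units by auto
  then have span_B: "w e \<in> F2.span (w ` B)" for e
    using span_unit_vecs[OF fin(1)] outside by simp
  have le: "card S \<le> card B" using indep_cols_card_le[OF less.prems(1) fin(1) less.prems(2)] span_B by blast
  show ?case
  proof (cases "card S = card B")
    case True
    then show ?thesis using less.prems by blast
  next
    case False
    have "\<exists>b\<in>B. w b \<notin> F2.span (w ` S)"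
    proof (rule ccontr)
      assume "\<not> ?thesis"
      then have "card B \<le> card S"
        using indep_cols_card_le[OF fin(1) less.prems(1) indep_cols_unit_vecs[OF units fin(1)]] by blast
      then show False using le False by simp
    qed
    then obtain b where b: "b \<in> B" "w b \<notin> F2.span (w ` S)" by blast
    then have "b \<notin> S" using F2.span_base[of "w b" "w ` S"] by auto
    then have "indep_cols w (insert b S)" using indep_cols_insert[OF less.prems(1)] less.prems(2) b by blast
    moreover have "card B - card (insert b S) < card B - card S"
      using \<open>b \<notin> S\<close> less.prems(1) le False by simp
    ultimately obtain S' where "insert b S \<subseteq> S'" "S' \<subseteq> insert b S \<union> B" "card S' = card B"
        "indep_cols w S'"
      using less.hyps less.prems(1) by blast
    then show ?thesis using b(1) by blast
  qed
qed

lemma add_mem_span_if_codim_1: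
  assumes fin: "finite B" "finite T" and T: "indep_cols a T" "Suc (card T) = card B"
    and sub: "a ` T \<subseteq> F2.span (v ` B)"
    and x: "x \<in> F2.span (v ` B)" "x \<notin> F2.span (a ` T)"
    and y: "y \<in> F2.span (v ` B)" "y \<notin> F2.span (a ` T)"
  shows "x + y \<in> F2.span (a ` T)"
proof -
  have i: "inj_on a T" "F2.independent (a ` T)"
    using T(1) fin(2) by (simp_all add: indep_cols_iff_independent)
  have ix: "F2.independent (insert x (a ` T))" by (rule F2.independent_insertI[OF x(2) i(2)])
  have "y \<in> F2.span (insert x (a ` T))"
  proof (rule ccontr)
    assume ny: "y \<notin> F2.span (insert x (a ` T))"
    have "card (insert y (insert x (a ` T))) \<le> card (v ` B)"
      using F2.independent_span_bound[OF _ F2.independent_insertI[OF ny ix]] sub x(1) y(1) fin(1)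
      by simp
    moreover have "card (v ` B) \<le> card B" using card_image_le[OF fin(1)] .
    moreover have "y \<notin> insert x (a ` T)" "x \<notin> a ` T"
      using F2.span_base[of y "insert x (a ` T)"] F2.span_base[of x "a ` T"] ny x(2) by blast+
    then have "card (insert y (insert x (a ` T))) = Suc (Suc (card T))"
      using card_image[OF i(1)] fin(2) by simp
    ultimately show False using T(2) by linarith
  qed
  then obtain c where c: "y - scale_bit c x \<in> F2.span (a ` T)"
    using F2.span_breakdown_eq by blast
  have "c \<noteq> 0"
  proof
    assume "c = 0"
    then have "scale_bit c x = 0" by (simp add: scale_bit_def fun_eq_iff)
    with c y(2) show False by simp
  qed
  then have "scale_bit c x = x" by (simp add: scale_bit_def)
  then show ?thesis using c by (simp add: add.commute fun_diff_eq_add)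
qed

(* The other columns of S, if independent, span a hyperplane of span (v ` B), and over GF(2)
   the indicator of lying outside a hyperplane is additive. *)
lemma indep_cols_update_add:
  assumes fin: "finite B" "finite S" and q: "q \<in> S" and card: "card S = card B"
    and span: "\<forall>e\<in>S - {q}. a e \<in> F2.span (v ` B)"
    and x: "x \<in> F2.span (v ` B)" and y: "y \<in> F2.span (v ` B)"
  shows "(of_bool (indep_cols (a(q := x + y)) S) :: bit) =
    of_bool (indep_cols (a(q := x)) S) + of_bool (indep_cols (a(q := y)) S)"
proof -
  let ?T = "S - {q}"
  let ?H = "F2.span (a ` ?T)"
  have indep_update: "indep_cols (a(q := z)) S \<longleftrightarrow> indep_cols a ?T \<and> z \<notin> ?H" for z
  proof -
    have "S = insert q ?T" using q by auto
    then have "indep_cols (a(q := z)) S \<longleftrightarrow> indep_cols (a(q := z)) ?T \<and> z \<notin> F2.span ((a(q := z)) ` ?T)"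
      using indep_cols_insert[of ?T q "a(q := z)"] fin(2) by simp
    moreover have "indep_cols (a(q := z)) ?T = indep_cols a ?T" by (rule indep_cols_cong) auto
    moreover have "(a(q := z)) ` ?T = a ` ?T" by auto
    ultimately show ?thesis by simp
  qed
  show ?thesis
  proof (cases "indep_cols a ?T")
    case False
    then show ?thesis using indep_update by simp
  next
    case True
    have "x + y \<notin> ?H \<longleftrightarrow> (x \<notin> ?H \<longleftrightarrow> y \<in> ?H)"
    proof (cases "x \<in> ?H \<or> y \<in> ?H")
      case True
      have cancel: "u + w \<in> ?H \<longleftrightarrow> w \<in> ?H" if "u \<in> ?H" for u w
      proof
        assume "u + w \<in> ?H"
        then have "u + (u + w) \<in> ?H" using F2.span_add[OF that] by blast
        then show "w \<in> ?H" by (simp add: add.assoc[symmetric])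
      qed (rule F2.span_add[OF that])
      then show ?thesis using True cancel[of x y] cancel[of y x] by (auto simp: add.commute)
    next
      case False
      have "card S > 0" using q fin(2) card_gt_0_iff by blast
      then have "Suc (card ?T) = card B" using card q fin(2) by simp
      then have "x + y \<in> ?H"
        using add_mem_span_if_codim_1[OF fin(1) _ True] span x y False fin(2) by auto
      then show ?thesis using False by simp
    qed
    then show ?thesis using indep_update True by auto
  qed
qed

section \<open>Fundamental matrices\<close>

(* Column e with respect to B: the unit vector of e for e \<in> B, and otherwise the incidence
   vector of the fundamental circuit of e, with P deciding which exchanges give bases. *)
definition fund_matrix :: "('a set \<Rightarrow> bool) \<Rightarrow> 'a set \<Rightarrow> 'a \<Rightarrow> 'a \<Rightarrow> bit" where
  "fund_matrix P B e =
     (if e \<in> B then unit_vec e else (\<lambda>b. of_bool (b \<in> B \<and> P (insert e (B - {b})))))"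

lemma fund_matrix_outside: "i \<notin> B \<Longrightarrow> fund_matrix P B e i = 0"
  by (auto simp: fund_matrix_def unit_vec_def)

lemma fund_matrix_base_col: "b \<in> B \<Longrightarrow> fund_matrix P B b = unit_vec b"
  by (simp add: fund_matrix_def)

lemma fund_matrix_entry:
  "e \<notin> B \<Longrightarrow> b \<in> B \<Longrightarrow> fund_matrix P B e b = of_bool (P (insert e (B - {b})))"
  by (simp add: fund_matrix_def)

lemma in_span_if_full_rank:
  assumes "finite B" and outside: "\<forall>e i. i \<notin> B \<longrightarrow> w e i = 0"
    and "finite B2" "indep_cols w B2" "card B2 = card B"
  shows "w e \<in> F2.span (w ` B2)"
proof (rule ccontr)
  assume e: "w e \<notin> F2.span (w ` B2)"
  then have "e \<notin> B2" using F2.span_base[of "w e" "w ` B2"] by auto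
  then have "indep_cols w (insert e B2)" using indep_cols_insert[of B2 e w] assms(3,4) e by simp
  moreover have "\<forall>x \<in> insert e B2. w x \<in> F2.span (unit_vec ` B)"
    using span_unit_vecs[OF assms(1)] outside by auto
  ultimately have "card (insert e B2) \<le> card B"
    using indep_cols_card_le[of "insert e B2" B w unit_vec] assms(1,3) by simp
  then show False using \<open>e \<notin> B2\<close> assms(3,5) by simp
qed

lemma coeff_eq_of_bool_exchange_indep:
  assumes indep: "indep_cols w B2" and fin: "finite B2" and e: "e \<notin> B2" and b: "b \<in> B2"
    and c: "w e = (\<Sum>b'\<in>B2. scale_bit (c b') (w b'))"
  shows "c b = of_bool (indep_cols w (insert e (B2 - {b})))"
proof -
  have fin': "finite (B2 - {b})" using fin by simp
  have split: "(\<Sum>b'\<in>B2. scale_bit (d b') (w b')) =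
      scale_bit (d b) (w b) + (\<Sum>b'\<in>B2 - {b}. scale_bit (d b') (w b'))" for d
    using b fin by (simp add: sum.remove)
  have "indep_cols w (insert e (B2 - {b})) \<longleftrightarrow> w e \<notin> F2.span (w ` (B2 - {b}))"
    using indep_cols_insert[OF fin', of e w] indep_cols_subset[OF indep _ fin, of "B2 - {b}"] e
    by auto
  also have "\<dots> \<longleftrightarrow> c b \<noteq> 0"
  proof
    assume ns: "w e \<notin> F2.span (w ` (B2 - {b}))"
    show "c b \<noteq> 0"
    proof
      assume "c b = 0"
      then have "w e = (\<Sum>b'\<in>B2 - {b}. scale_bit (c b') (w b'))" using c split[of c] by simp
      then show False using ns in_span_image_iff[OF fin'] by blast
    qed
  next
    assume "c b \<noteq> 0"
    show "w e \<notin> F2.span (w ` (B2 - {b}))"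
    proof
      assume "w e \<in> F2.span (w ` (B2 - {b}))"
      then obtain d where d: "w e = (\<Sum>b'\<in>B2 - {b}. scale_bit (d b') (w b'))"
        using in_span_image_iff[OF fin'] by blast
      have "(\<Sum>b'\<in>B2 - {b}. scale_bit ((d(b := 0)) b') (w b')) = (\<Sum>b'\<in>B2 - {b}. scale_bit (d b') (w b'))"
        by (intro sum.cong) auto
      then have "w e = (\<Sum>b'\<in>B2. scale_bit ((d(b := 0)) b') (w b'))"
        using d split[of "d(b := 0)"] by (simp add: scale_bit_def fun_eq_iff)
      then have "c b = (d(b := 0)) b" using coeffs_unique[OF indep fin, of c "d(b := 0)"] c b by simp
      then show False using \<open>c b \<noteq> 0\<close> by simp
    qed
  qed
  finally show ?thesis by simp
qed

lemma col_eq_sum_fund_matrix: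
  assumes indep: "indep_cols w B2" and fin: "finite B2" and span: "w e \<in> F2.span (w ` B2)"
  shows "w e = (\<Sum>b\<in>B2. scale_bit (fund_matrix (indep_cols w) B2 e b) (w b))"
proof (cases "e \<in> B2")
  case True
  have "(\<Sum>b\<in>B2. scale_bit (fund_matrix (indep_cols w) B2 e b) (w b)) =
      (\<Sum>b\<in>B2. if b = e then w e else 0)"
    using True by (intro sum.cong) (auto simp: fund_matrix_def unit_vec_def scale_bit_def fun_eq_iff)
  then show ?thesis using True fin by simp
next
  case False
  obtain c where c: "w e = (\<Sum>b\<in>B2. scale_bit (c b) (w b))"
    using span in_span_image_iff[OF fin] by blast
  also have "\<dots> = (\<Sum>b\<in>B2. scale_bit (fund_matrix (indep_cols w) B2 e b) (w b))"
    using coeff_eq_of_bool_exchange_indep[OF indep fin False _ c] False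
    by (intro sum.cong) (simp_all add: fund_matrix_entry)
  finally show ?thesis .
qed

lemma indep_cols_iff_fund_matrix:
  assumes indep: "indep_cols w B2" and fin: "finite B2" "finite S"
    and span: "\<forall>e\<in>S. w e \<in> F2.span (w ` B2)"
  shows "indep_cols w S \<longleftrightarrow> indep_cols (fund_matrix (indep_cols w) B2) S"
  using indep fin
proof (rule indep_cols_change_coords)
  show "\<forall>e\<in>S. \<forall>b. b \<notin> B2 \<longrightarrow> fund_matrix (indep_cols w) B2 e b = 0"
    by (simp add: fund_matrix_outside)
  show "\<forall>e\<in>S. w e = (\<Sum>b\<in>B2. scale_bit (fund_matrix (indep_cols w) B2 e b) (w b))"
    using col_eq_sum_fund_matrix[OF indep fin(1)] span by blast
qed

(* the GF(2) pivot rule for exchanging x1 by y1 *)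
lemma fund_matrix_pivot:
  assumes fin: "finite B" and units: "\<forall>b\<in>B. w b = unit_vec b"
    and outside: "\<forall>e i. i \<notin> B \<longrightarrow> w e i = 0"
    and x1: "x1 \<in> B" and y1: "y1 \<notin> B" "w y1 x1 = 1"
    and x2: "x2 \<in> B" "x2 \<noteq> x1" and e: "e \<notin> B" "e \<noteq> y1"
  shows "fund_matrix (indep_cols w) (insert y1 (B - {x1})) e x2 = w e x2 + w e x1 * w y1 x2"
proof -
  let ?B2 = "insert y1 (B - {x1})"
  let ?c = "fund_matrix (indep_cols w) ?B2 e"
  have fin2: "finite ?B2" using fin by simp
  have indep2: "indep_cols w ?B2"
    using indep_cols_exchange_unit_vec[OF fin x1 y1(1) units] outside y1(2) by simp
  have "card B > 0" using fin x1 card_gt_0_iff by blast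
  then have "card ?B2 = card B" using fin x1 y1(1) by (simp add: card.insert_remove)
  then have "w e = (\<Sum>b\<in>?B2. scale_bit (?c b) (w b))"
    using col_eq_sum_fund_matrix[OF indep2 fin2] in_span_if_full_rank[OF fin outside fin2 indep2]
    by blast
  then have row: "w e i = ?c y1 * w y1 i + (\<Sum>b\<in>B - {x1}. ?c b * w b i)" for i
    using fin y1(1) by (simp add: sum_fun_apply scale_bit_def)
  have "(\<Sum>b\<in>B - {x1}. ?c b * w b i) = (if i \<in> B - {x1} then ?c i else 0)" for i
    using fin units by (simp add: unit_vec_def if_distrib cong: if_cong)
  then have "w e x1 = ?c y1" "w e x2 = ?c y1 * w y1 x2 + ?c x2"
    using row[of x1] row[of x2] y1(2) x2 by simp_all
  then show ?thesis by (simp add: add.assoc[symmetric])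
qed

section \<open>Bases and the number Delta\<close>

lemma card_Diff_swap:
  assumes "finite A" "finite B" "card A = card B"
  shows "card (A - B) = card (B - A)"
  using assms by (simp add: card_Diff_subset_Int Int_commute)

lemma mset_set_add_eq_iff:
  assumes "finite D1" "finite D2" "finite B1" "finite B2"
  shows "mset_set D1 + mset_set D2 = mset_set B1 + mset_set B2 \<longleftrightarrow>
         D1 \<inter> D2 = B1 \<inter> B2 \<and> D1 \<union> D2 = B1 \<union> B2"
proof -
  have "count (mset_set D1 + mset_set D2) x = count (mset_set B1 + mset_set B2) x \<longleftrightarrow>
      (x \<in> D1 \<inter> D2 \<longleftrightarrow> x \<in> B1 \<inter> B2) \<and> (x \<in> D1 \<union> D2 \<longleftrightarrow> x \<in> B1 \<union> B2)" for x
    using assms by (auto simp: count_mset_set')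
  then show ?thesis by (auto simp: multiset_eq_iff)
qed

locale matroid =
  fixes E :: "'a set" and \<B> :: "'a set set"
  assumes matroid_bases: "matroid_bases E \<B>"
begin

lemma bases_subset: "B \<in> \<B> \<Longrightarrow> B \<subseteq> E"
  using matroid_bases unfolding matroid_bases_def by blast

lemma ground_finite: "finite E"
  using matroid_bases unfolding matroid_bases_def by blast

lemma base_finite: "B \<in> \<B> \<Longrightarrow> finite B"
  using bases_subset ground_finite finite_subset by blast

lemma basis_exchange:
  "B1 \<in> \<B> \<Longrightarrow> B2 \<in> \<B> \<Longrightarrow> x \<in> B1 - B2 \<Longrightarrow> \<exists>y\<in>B2 - B1. insert y (B1 - {x}) \<in> \<B>"
  using matroid_bases unfolding matroid_bases_def by blast

lemma bases_nonempty: "\<B> \<noteq> {}"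
  using matroid_bases unfolding matroid_bases_def by blast

lemma bases_card_le:
  assumes "B1 \<in> \<B>" "B2 \<in> \<B>"
  shows "card B1 \<le> card B2"
  using assms
proof (induction "card (B1 - B2)" arbitrary: B1)
  case 0
  then have "B1 \<subseteq> B2" using base_finite[of B1] by auto
  then show ?case using card_mono base_finite 0 by blast
next
  case (Suc n)
  then obtain x where x: "x \<in> B1 - B2" by (metis card.empty all_not_in_conv nat.distinct(1))
  then obtain y where y: "y \<in> B2 - B1" "insert y (B1 - {x}) \<in> \<B>"
    using basis_exchange Suc by blast
  have f: "finite B1" using base_finite Suc by blast
  have "insert y (B1 - {x}) - B2 = (B1 - B2) - {x}" using y x by auto
  then have "card (insert y (B1 - {x})) \<le> card B2"
    using Suc.hyps(1)[of "insert y (B1 - {x})"] Suc.hyps(2) Suc.prems x y f by simp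
  then show ?case using x y f by (simp add: card.insert_remove)
qed

lemma bases_card_eq: "B1 \<in> \<B> \<Longrightarrow> B2 \<in> \<B> \<Longrightarrow> card B1 = card B2"
  using bases_card_le le_antisym by blast

(* Requiring p \<in> Z selects one of the two orderings of each pair {D1, D2}. *)
definition base_splits :: "'a set \<Rightarrow> 'a set \<Rightarrow> 'a \<Rightarrow> 'a set set" where
  "base_splits C G p = {Z. Z \<subseteq> G \<and> p \<in> Z \<and> C \<union> Z \<in> \<B> \<and> C \<union> (G - Z) \<in> \<B>}"

lemma Delta_eq_card_pairs:
  assumes "B1 \<in> \<B>" "B2 \<in> \<B>"
  shows "Delta \<B> B1 B2 = card {{D1, D2} | D1 D2. D1 \<in> \<B> \<and> D2 \<in> \<B> \<and>
      D1 \<inter> D2 = B1 \<inter> B2 \<and> D1 \<union> D2 = B1 \<union> B2}"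
proof -
  have "mset_set D1 + mset_set D2 = mset_set B1 + mset_set B2 \<longleftrightarrow>
      D1 \<inter> D2 = B1 \<inter> B2 \<and> D1 \<union> D2 = B1 \<union> B2" if "D1 \<in> \<B>" "D2 \<in> \<B>" for D1 D2
    using that assms by (intro mset_set_add_eq_iff) (auto intro: base_finite)
  then show ?thesis
    unfolding Delta_def by (intro arg_cong[where f = card] Collect_cong ex_cong1 conj_cong refl)
qed

lemma Delta_self:
  assumes B: "B \<in> \<B>"
  shows "Delta \<B> B B = 1"
proof -
  have "{{D1, D2} | D1 D2. D1 \<in> \<B> \<and> D2 \<in> \<B> \<and> D1 \<inter> D2 = B \<inter> B \<and> D1 \<union> D2 = B \<union> B} = {{B}}"
  proof (intro equalityI subsetI)
    fix P assume "P \<in> {{D1, D2} | D1 D2. D1 \<in> \<B> \<and> D2 \<in> \<B> \<and> D1 \<inter> D2 = B \<inter> B \<and> D1 \<union> D2 = B \<union> B}"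
    then obtain D1 D2 where "P = {D1, D2}" "D1 \<inter> D2 = B" "D1 \<union> D2 = B" by auto
    then show "P \<in> {{B}}" by blast
  qed (use B in blast)
  then show ?thesis using Delta_eq_card_pairs[OF B B] by simp
qed

lemma Delta_eq_card_base_splits:
  assumes B1: "B1 \<in> \<B>" and B2: "B2 \<in> \<B>" and p: "p \<in> B1 - B2"
  shows "Delta \<B> B1 B2 = card (base_splits (B1 \<inter> B2) ((B1 \<union> B2) - (B1 \<inter> B2)) p)"
proof -
  define C where "C = B1 \<inter> B2"
  define G where "G = (B1 \<union> B2) - (B1 \<inter> B2)"
  let ?pairs = "{{D1, D2} | D1 D2. D1 \<in> \<B> \<and> D2 \<in> \<B> \<and> D1 \<inter> D2 = B1 \<inter> B2 \<and> D1 \<union> D2 = B1 \<union> B2}"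
  let ?pair = "\<lambda>Z. {C \<union> Z, C \<union> (G - Z)}"
  have CG: "C \<inter> G = {}" "p \<notin> C" using p by (auto simp: C_def G_def)
  have inj: "inj_on ?pair (base_splits C G p)"
  proof (rule inj_onI)
    fix Z1 Z2 assume Z: "Z1 \<in> base_splits C G p" "Z2 \<in> base_splits C G p" "?pair Z1 = ?pair Z2"
    have "p \<in> C \<union> Z1" "p \<notin> C \<union> (G - Z2)" using Z(1,2) CG(2) by (auto simp: base_splits_def)
    moreover have "C \<union> Z1 \<in> {C \<union> Z2, C \<union> (G - Z2)}" using Z(3) by (metis insertI1)
    ultimately have "C \<union> Z1 = C \<union> Z2" by blast
    moreover have "Z1 \<subseteq> G" "Z2 \<subseteq> G" using Z(1,2) by (auto simp: base_splits_def)
    ultimately show "Z1 = Z2" using CG(1) by blast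
  qed
  have img: "?pair ` base_splits C G p = ?pairs"
  proof
    show "?pair ` base_splits C G p \<subseteq> ?pairs"
    proof
      fix P assume "P \<in> ?pair ` base_splits C G p"
      then obtain Z where Z: "Z \<in> base_splits C G p" "P = ?pair Z" by blast
      have "(C \<union> Z) \<inter> (C \<union> (G - Z)) = B1 \<inter> B2" "(C \<union> Z) \<union> (C \<union> (G - Z)) = B1 \<union> B2"
        using Z(1) by (auto simp: base_splits_def C_def G_def)
      then show "P \<in> ?pairs" using Z unfolding base_splits_def by blast
    qed
    show "?pairs \<subseteq> ?pair ` base_splits C G p"
    proof
      fix P assume "P \<in> ?pairs"
      then obtain D1 D2 where D: "P = {D1, D2}" "D1 \<in> \<B>" "D2 \<in> \<B>"
          "D1 \<inter> D2 = B1 \<inter> B2" "D1 \<union> D2 = B1 \<union> B2"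
        by blast
      have "\<exists>D D'. P = {D, D'} \<and> D \<in> \<B> \<and> D' \<in> \<B> \<and> D \<inter> D' = B1 \<inter> B2 \<and>
          D \<union> D' = B1 \<union> B2 \<and> p \<in> D"
      proof (cases "p \<in> D1")
        case True
        then show ?thesis using D by blast
      next
        case False
        then have "p \<in> D2" using D(5) p by blast
        moreover have "P = {D2, D1}" "D2 \<inter> D1 = B1 \<inter> B2" "D2 \<union> D1 = B1 \<union> B2"
          using D(1,4,5) by (simp_all add: insert_commute Int_commute Un_commute)
        ultimately show ?thesis using D(2,3) by blast
      qed
      then obtain D D' where D': "P = {D, D'}" "D \<in> \<B>" "D' \<in> \<B>"
          "D \<inter> D' = B1 \<inter> B2" "D \<union> D' = B1 \<union> B2" "p \<in> D"
        by blast
      have parts: "C \<union> (D - C) = D" "C \<union> (G - (D - C)) = D'"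
        using D'(4,5) by (auto simp: C_def G_def)
      moreover have "D - C \<subseteq> G" "p \<in> D - C"
        using D'(4,5,6) p by (auto simp: C_def G_def)
      ultimately have "D - C \<in> base_splits C G p"
        using D'(2,3) unfolding base_splits_def by simp
      then show "P \<in> ?pair ` base_splits C G p"
        by (rule rev_image_eqI) (simp only: D'(1) parts)
    qed
  qed
  have "card ?pairs = card (base_splits C G p)"
    by (subst img[symmetric]) (rule card_image[OF inj])
  with Delta_eq_card_pairs[OF B1 B2] show ?thesis unfolding C_def G_def by (rule trans)
qed

lemma card_base_splits:
  assumes B1: "B1 \<in> \<B>" and B2: "B2 \<in> \<B>"
    and Z: "Z \<in> base_splits (B1 \<inter> B2) ((B1 \<union> B2) - (B1 \<inter> B2)) p"
  shows "card Z = card (B1 - B2)"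
proof -
  have fin: "finite Z" "finite (B1 \<inter> B2)"
    using Z base_finite[OF B1] base_finite[OF B2] finite_subset by (auto simp: base_splits_def)
  have "B1 \<inter> B2 \<inter> Z = {}" using Z by (auto simp: base_splits_def)
  then have "card (B1 \<inter> B2) + card Z = card B1"
    using Z bases_card_eq[OF _ B1] card_Un_disjoint[OF fin(2,1)] by (auto simp: base_splits_def)
  moreover have "card (B1 \<inter> B2) \<le> card B1" using base_finite[OF B1] by (simp add: card_mono)
  then have "card (B1 - B2) + card (B1 \<inter> B2) = card B1"
    using card_Diff_subset_Int[of B1 B2] fin(2) by simp
  ultimately show ?thesis by simp
qed

lemma Delta_le_1:
  assumes B1: "B1 \<in> \<B>" and B2: "B2 \<in> \<B>" and "card (B1 - B2) \<le> 1"
  shows "Delta \<B> B1 B2 \<le> 1"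
proof (cases "B1 - B2 = {}")
  case True
  then have "B1 = B2"
    using card_subset_eq[OF base_finite[OF B2]] bases_card_eq[OF B1 B2] by blast
  then show ?thesis using Delta_self B1 by simp
next
  case False
  then obtain p where p: "p \<in> B1 - B2" by blast
  have k: "card (B1 - B2) = 1" using False assms(3) base_finite[OF B1] by (simp add: le_Suc_eq)
  have sub: "base_splits (B1 \<inter> B2) ((B1 \<union> B2) - (B1 \<inter> B2)) p \<subseteq> {{p}}"
  proof
    fix Z assume Z: "Z \<in> base_splits (B1 \<inter> B2) ((B1 \<union> B2) - (B1 \<inter> B2)) p"
    then have "card Z = 1" "p \<in> Z"
      using card_base_splits[OF B1 B2 Z] k by (auto simp: base_splits_def)
    then show "Z \<in> {{p}}" by (auto simp: card_1_singleton_iff)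
  qed
  show ?thesis
    using Delta_eq_card_base_splits[OF B1 B2 p] card_mono[OF _ sub] by simp
qed

lemma exchange_pair:
  assumes ab: "insert a (insert b C) \<in> \<B>" and cd: "insert c (insert d C) \<in> \<B>"
    and "a \<notin> C" "a \<noteq> b" "a \<noteq> c" "a \<noteq> d"
  shows "insert c (insert b C) \<in> \<B> \<or> insert d (insert b C) \<in> \<B>"
proof -
  have "a \<in> insert a (insert b C) - insert c (insert d C)" using assms by simp
  then obtain y where y: "y \<in> insert c (insert d C) - insert a (insert b C)"
      "insert y (insert a (insert b C) - {a}) \<in> \<B>"
    using basis_exchange[OF ab cd] by blast
  have "insert a (insert b C) - {a} = insert b C" using assms by auto
  then show ?thesis using y by auto
qed

lemma Delta_eq_3:
  assumes distinct: "distinct [x1, x2, y1, y2]" and C: "{x1, x2, y1, y2} \<inter> C = {}"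
    and bases: "insert x1 (insert x2 C) \<in> \<B>" "insert y1 (insert y2 C) \<in> \<B>"
      "insert x1 (insert y1 C) \<in> \<B>" "insert x2 (insert y2 C) \<in> \<B>"
      "insert x1 (insert y2 C) \<in> \<B>" "insert x2 (insert y1 C) \<in> \<B>"
  shows "Delta \<B> (insert x1 (insert x2 C)) (insert y1 (insert y2 C)) = 3"
proof -
  let ?B = "insert x1 (insert x2 C)" and ?S = "insert y1 (insert y2 C)"
  have I: "?B \<inter> ?S = C" and G: "(?B \<union> ?S) - C = {x1, x2, y1, y2}"
    using distinct C by auto
  have "finite C" using base_finite[OF bases(1)] by simp
  have "base_splits C {x1, x2, y1, y2} x1 = {{x1, x2}, {x1, y1}, {x1, y2}}"
  proof (intro equalityI subsetI)
    fix Z assume Z: "Z \<in> base_splits C {x1, x2, y1, y2} x1"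
    then have Z_sub: "Z \<subseteq> {x1, x2, y1, y2}" "x1 \<in> Z" and "C \<union> Z \<in> \<B>"
      by (auto simp: base_splits_def)
    then have "card (C \<union> Z) = card C + 2"
      using bases_card_eq[OF _ bases(1)] distinct C \<open>finite C\<close> by simp
    moreover have "finite Z" using Z_sub(1) finite_subset by auto
    moreover have "C \<inter> Z = {}" using Z_sub(1) C by blast
    ultimately have "card Z = 2" using \<open>finite C\<close> by (simp add: card_Un_disjoint)
    then obtain t where "Z = {x1, t}" "t \<noteq> x1"
      using Z_sub(2) by (metis card_2_iff doubleton_eq_iff insert_iff singletonD)
    then show "Z \<in> {{x1, x2}, {x1, y1}, {x1, y2}}" using Z_sub(1) by auto
  next
    fix Z assume "Z \<in> {{x1, x2}, {x1, y1}, {x1, y2}}"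
    then show "Z \<in> base_splits C {x1, x2, y1, y2} x1"
      using bases distinct by (auto simp: base_splits_def insert_commute insert_Diff_if)
  qed
  moreover have "card {{x1, x2}, {x1, y1}, {x1, y2}} = 3"
    using distinct by (simp add: doubleton_eq_iff)
  moreover have x1: "x1 \<in> ?B - ?S" using distinct C by auto
  have "Delta \<B> ?B ?S = card (base_splits C {x1, x2, y1, y2} x1)"
    using Delta_eq_card_base_splits[OF bases(1,2) x1] unfolding I G .
  ultimately show ?thesis by simp
qed

lemma base_iff_indep_cols:
  assumes rep: "\<forall>S. S \<subseteq> E \<longrightarrow> (indep \<B> S \<longleftrightarrow> indep_cols v S)" and B: "B \<in> \<B>" and S: "S \<subseteq> E"
  shows "S \<in> \<B> \<longleftrightarrow> card S = card B \<and> indep_cols v S"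
proof
  assume "S \<in> \<B>"
  then show "card S = card B \<and> indep_cols v S"
    using rep S bases_card_eq[OF _ B] unfolding indep_def by blast
next
  assume "card S = card B \<and> indep_cols v S"
  then obtain D where "D \<in> \<B>" "S \<subseteq> D" "card S = card D"
    using rep S bases_card_eq[OF B] unfolding indep_def by metis
  then show "S \<in> \<B>" using card_subset_eq[OF base_finite] by metis
qed

lemma col_in_span_base:
  assumes rep: "\<forall>S. S \<subseteq> E \<longrightarrow> (indep \<B> S \<longleftrightarrow> indep_cols v S)"
    and B: "B \<in> \<B>" and q: "q \<in> E"
  shows "v q \<in> F2.span (v ` B)"
proof (cases "q \<in> B")
  case True
  then show ?thesis by (simp add: F2.span_base)
next
  case False
  have "\<not> indep \<B> (insert q B)"
    using False base_finite bases_card_eq[OF _ B] card_mono unfolding indep_def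
    by (metis B card_insert_disjoint not_less_eq_eq order_refl)
  then have "\<not> indep_cols v (insert q B)" using rep bases_subset[OF B] q by auto
  moreover have "indep_cols v B" using base_iff_indep_cols[OF rep B bases_subset[OF B]] B by simp
  ultimately show ?thesis using indep_cols_insert[OF base_finite[OF B] False] by blast
qed

end

section \<open>Binary matroids: Delta is even or at most 1\<close>

lemma of_nat_bit: "(of_nat n :: bit) = of_bool (odd n)"
  by (induction n) auto

lemma even_card_involution:
  assumes "finite S" and inv: "\<And>x. x \<in> S \<Longrightarrow> f x \<in> S \<and> f x \<noteq> x \<and> f (f x) = x"
  shows "even (card S)"
proof -
  let ?P = "(\<lambda>x. {x, f x}) ` S"
  have orbit: "{x, f x} = {z, f z}" if "x \<in> S" "z \<in> {x, f x}" for x z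
    using that inv[of x] by auto
  have "\<Union>?P = S" using inv by blast
  moreover have "2 * card ?P = card (\<Union>?P)"
  proof (rule card_partition)
    show "finite ?P" "finite (\<Union>?P)" using \<open>\<Union>?P = S\<close> assms(1) by simp_all
    show "card c = 2" if "c \<in> ?P" for c
      using that by (auto simp: card_insert_if dest: inv)
    show "c1 \<inter> c2 = {}" if "c1 \<in> ?P" "c2 \<in> ?P" "c1 \<noteq> c2" for c1 c2
      using that orbit by blast
  qed
  ultimately show ?thesis by (metis dvd_triv_left)
qed

lemma inj_on_insert_swap:
  assumes "inj_on l S" "z \<in> S" "l z' = l z"
  shows "inj_on l (insert z' (S - {z}))"
proof -
  have "l z \<notin> l ` (S - {z})" using assms(1,2) by (auto simp: inj_on_def)
  then show ?thesis using assms inj_on_subset[OF assms(1)] by (auto simp: inj_on_insert)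
qed

definition col_splits :: "('a \<Rightarrow> 'i \<Rightarrow> bit) \<Rightarrow> 'a set \<Rightarrow> 'a set \<Rightarrow> 'a \<Rightarrow> nat \<Rightarrow> 'a set set" where
  "col_splits a C G p k =
     {Z. Z \<subseteq> G \<and> p \<in> Z \<and> card Z = k \<and> indep_cols a (C \<union> Z) \<and> indep_cols a (C \<union> (G - Z))}"

(* B1 - C and Q play the roles of B1 - B2 and B2 - B1. *)
locale sym_diff_frame =
  fixes v :: "'a \<Rightarrow> 'i \<Rightarrow> bit" and B1 C Q :: "'a set" and p0 p1 :: 'a and k :: nat
  assumes finite_B1: "finite B1" and indep_B1: "indep_cols v B1" and C_subset: "C \<subseteq> B1"
    and p0: "p0 \<in> B1 - C" and p1: "p1 \<in> B1 - C" and p0_ne_p1: "p0 \<noteq> p1"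
    and finite_Q: "finite Q" and Q_disjoint: "Q \<inter> B1 = {}"
    and card_B1_diff: "card (B1 - C) = k" and card_Q: "card Q = k"
begin

abbreviation G where "G \<equiv> (B1 - C) \<union> Q"

lemma finite_G: "finite G"
  using finite_B1 finite_Q by simp

lemma finite_C: "finite C"
  using finite_B1 C_subset finite_subset by blast

lemma C_G_disjoint: "C \<inter> G = {}"
  using C_subset Q_disjoint by blast

lemma card_C_Un:
  assumes "Z \<subseteq> G" "card Z = k"
  shows "card (C \<union> Z) = card B1"
proof -
  have "finite Z" using assms(1) finite_G finite_subset by blast
  then have "card (C \<union> Z) = card C + card Z"
    using assms(1) C_G_disjoint finite_C by (subst card_Un_disjoint) auto
  moreover have "card B1 = card C + k"
    using card_Diff_subset[OF finite_C C_subset] card_mono[OF finite_B1 C_subset] card_B1_diff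
    by simp
  ultimately show ?thesis using assms(2) by simp
qed

lemma card_C_Un_compl:
  assumes "Z \<subseteq> G" "card Z = k"
  shows "card (C \<union> (G - Z)) = card B1"
proof -
  have "card G = 2 * k"
    using Q_disjoint finite_B1 finite_Q card_B1_diff card_Q by (subst card_Un_disjoint) auto
  then have "card (G - Z) = k" using assms finite_G by (simp add: card_Diff_subset finite_subset)
  then show ?thesis using card_C_Un[of "G - Z"] by blast
qed

lemma of_nat_card_col_splits:
  "(of_nat (card (col_splits a C G p0 k)) :: bit) =
   (\<Sum>Z | Z \<subseteq> G \<and> p0 \<in> Z \<and> card Z = k.
      of_bool (indep_cols a (C \<union> Z)) * of_bool (indep_cols a (C \<union> (G - Z))))"
proof -
  let ?Zs = "{Z. Z \<subseteq> G \<and> p0 \<in> Z \<and> card Z = k}"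
  have "finite ?Zs" using finite_G by (rule finite_subset[rotated, OF finite_Pow_iff[THEN iffD2]]) auto
  have "col_splits a C G p0 k = {Z \<in> ?Zs. indep_cols a (C \<union> Z) \<and> indep_cols a (C \<union> (G - Z))}"
    unfolding col_splits_def by auto
  then have "(of_nat (card (col_splits a C G p0 k)) :: bit) =
      (\<Sum>Z \<in> ?Zs. if indep_cols a (C \<union> Z) \<and> indep_cols a (C \<union> (G - Z)) then 1 else 0)"
    using sum.inter_filter[OF \<open>finite ?Zs\<close>, of "\<lambda>_. 1::bit"] by simp
  also have "\<dots> = (\<Sum>Z \<in> ?Zs. of_bool (indep_cols a (C \<union> Z)) * of_bool (indep_cols a (C \<union> (G - Z))))"
    by (intro sum.cong) auto
  finally show ?thesis .
qed

lemma col_splits_update_add: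
  assumes q: "q \<in> Q" and span: "\<forall>e\<in>(C \<union> G) - {q}. a e \<in> F2.span (v ` B1)"
    and x: "x \<in> F2.span (v ` B1)" and y: "y \<in> F2.span (v ` B1)"
  shows "(of_nat (card (col_splits (a(q := x + y)) C G p0 k)) :: bit) =
    of_nat (card (col_splits (a(q := x)) C G p0 k)) + of_nat (card (col_splits (a(q := y)) C G p0 k))"
proof -
  let ?ind = "\<lambda>z S. of_bool (indep_cols (a(q := z)) S) :: bit"
  have split_add: "?ind (x + y) (C \<union> Z) * ?ind (x + y) (C \<union> (G - Z)) =
      ?ind x (C \<union> Z) * ?ind x (C \<union> (G - Z)) + ?ind y (C \<union> Z) * ?ind y (C \<union> (G - Z))"
    if Z: "Z \<subseteq> G" "card Z = k" for Z
  proof -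
    have additive: "?ind (x + y) S = ?ind x S + ?ind y S"
      if "S \<subseteq> C \<union> G" "q \<in> S" "card S = card B1" for S
    proof (rule indep_cols_update_add[OF finite_B1 _ that(2,3) _ x y])
      show "finite S" using that(1) finite_C finite_G finite_subset by blast
      show "\<forall>e\<in>S - {q}. a e \<in> F2.span (v ` B1)" using that(1) span by blast
    qed
    have unchanged: "?ind z S = of_bool (indep_cols a S)" if "q \<notin> S" for z S
    proof -
      have "indep_cols (a(q := z)) S = indep_cols a S" using that by (intro indep_cols_cong) auto
      then show ?thesis by simp
    qed
    have sub: "C \<union> Z \<subseteq> C \<union> G" "C \<union> (G - Z) \<subseteq> C \<union> G" using Z(1) by auto
    have "q \<in> G" using q by blast
    then consider "q \<in> Z" "q \<notin> C \<union> (G - Z)" | "q \<notin> C \<union> Z" "q \<in> C \<union> (G - Z)"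
      using C_G_disjoint by blast
    then show ?thesis
    proof cases
      case 1
      then show ?thesis
        using additive[OF sub(1)] unchanged[of "C \<union> (G - Z)"] card_C_Un[OF Z]
        by (simp add: distrib_right)
    next
      case 2
      then show ?thesis
        using additive[OF sub(2)] unchanged[of "C \<union> Z"] card_C_Un_compl[OF Z]
        by (simp add: distrib_left)
    qed
  qed
  show ?thesis unfolding of_nat_card_col_splits using split_add by (simp add: sum.distrib[symmetric])
qed

lemma col_splits_update_zero:
  assumes q: "q \<in> Q"
  shows "col_splits (a(q := 0)) C G p0 k = {}"
proof -
  have dependent: "\<not> indep_cols (a(q := 0)) S" if "S \<subseteq> C \<union> G" "q \<in> S" for S
  proof
    assume "indep_cols (a(q := 0)) S"
    moreover have "finite S" using that(1) finite_C finite_G finite_subset by blast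
    ultimately have "F2.independent ((a(q := 0)) ` S)" by (simp add: indep_cols_iff_independent)
    moreover have "0 \<in> (a(q := 0)) ` S" using that(2) by (metis fun_upd_same imageI)
    ultimately show False using F2.dependent_zero by blast
  qed
  have "Z \<notin> col_splits (a(q := 0)) C G p0 k" for Z
  proof (cases "q \<in> Z")
    case True
    then show ?thesis using dependent[of "C \<union> Z"] by (auto simp: col_splits_def)
  next
    case False
    then show ?thesis using dependent[of "C \<union> (G - Z)"] q by (auto simp: col_splits_def)
  qed
  then show ?thesis by blast
qed

end

(* l e is the element of B1 whose column is repeated by the column of e. *)
locale labelled_frame = sym_diff_frame +
  fixes l :: "'a \<Rightarrow> 'a"
  assumes l_into: "\<And>e. e \<in> C \<union> G \<Longrightarrow> l e \<in> B1" and l_id: "\<And>b. b \<in> B1 \<Longrightarrow> l b = b"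
begin

abbreviation p1_fibre where "p1_fibre \<equiv> {x \<in> G. l x = p1}"

lemma p1_fibre_singleton:
  assumes S: "S \<subseteq> C \<union> G" "inj_on l S" "card S = card B1"
  shows "\<exists>z. p1_fibre \<inter> S = {z}"
proof -
  have "l ` S \<subseteq> B1" using S(1) l_into by blast
  moreover have "card (l ` S) = card B1" using card_image[OF S(2)] S(3) by simp
  ultimately have "l ` S = B1" using card_subset_eq[OF finite_B1] by blast
  then obtain z where z: "z \<in> S" "l z = p1" using p1 by (metis DiffD1 imageE)
  have "z \<notin> C" using z(2) l_id C_subset p1 by auto
  then have "z \<in> p1_fibre" using z S(1) by auto
  moreover have "w = z" if "w \<in> p1_fibre \<inter> S" for w
    using that z S(2) by (auto simp: inj_on_def)
  ultimately show ?thesis using z(1) by blast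
qed

lemma swap_p1_fibre:
  assumes Z: "Z \<subseteq> G" "p0 \<in> Z" "card Z = k" "inj_on l (C \<union> Z)" "inj_on l (C \<union> (G - Z))"
  defines "Z' \<equiv> (Z - p1_fibre) \<union> (p1_fibre - Z)"
  shows "Z' \<subseteq> G \<and> p0 \<in> Z' \<and> card Z' = k \<and> inj_on l (C \<union> Z') \<and> inj_on l (C \<union> (G - Z')) \<and> Z' \<noteq> Z"
proof -
  have fibre_C: "p1_fibre \<inter> C = {}" using C_G_disjoint by auto
  obtain z1 where z1: "p1_fibre \<inter> (C \<union> Z) = {z1}"
    using p1_fibre_singleton[of "C \<union> Z"] Z card_C_Un by auto
  obtain z2 where z2: "p1_fibre \<inter> (C \<union> (G - Z)) = {z2}"
    using p1_fibre_singleton[of "C \<union> (G - Z)"] Z card_C_Un_compl by auto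
  have z1_in: "z1 \<in> Z" "z1 \<notin> C" "l z1 = p1" using z1 fibre_C by auto
  have z2_in: "z2 \<in> G" "z2 \<notin> Z" "z2 \<notin> C" "l z2 = p1" using z2 fibre_C by auto
  have Z': "Z' = insert z2 (Z - {z1})" using z1 z2 fibre_C by (auto simp: Z'_def)
  have "finite Z" using Z(1) finite_G finite_subset by blast
  have "card Z' = Suc (card (Z - {z1}))" using Z' z2_in(2) \<open>finite Z\<close> by simp
  also have "\<dots> = k" using card_Suc_Diff1[OF \<open>finite Z\<close> z1_in(1)] Z(3) by simp
  finally have card: "card Z' = k" .
  have "z1 \<noteq> p0" using z1_in(3) l_id p0 p0_ne_p1 by auto
  then have "Z' \<subseteq> G" "p0 \<in> Z'" using Z' Z(1,2) z2_in(1) by auto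
  moreover have "inj_on l (C \<union> Z')"
  proof -
    have "inj_on l (insert z2 ((C \<union> Z) - {z1}))"
      by (rule inj_on_insert_swap[OF Z(4)]) (use z1_in z2_in in simp_all)
    moreover have "C \<union> Z' = insert z2 ((C \<union> Z) - {z1})" using Z' z1_in(2) by auto
    ultimately show ?thesis by simp
  qed
  moreover have "inj_on l (C \<union> (G - Z'))"
  proof -
    have "inj_on l (insert z1 ((C \<union> (G - Z)) - {z2}))"
      by (rule inj_on_insert_swap[OF Z(5)]) (use z1_in z2_in in simp_all)
    moreover have "C \<union> (G - Z') = insert z1 ((C \<union> (G - Z)) - {z2})"
      using Z' Z(1) z1_in z2_in by auto
    ultimately show ?thesis by simp
  qed
  moreover have "Z' \<noteq> Z" using Z' z2_in(2) by auto
  ultimately show ?thesis using card by simp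
qed

lemma even_card_inj_splits:
  "even (card {Z. Z \<subseteq> G \<and> p0 \<in> Z \<and> card Z = k \<and> inj_on l (C \<union> Z) \<and> inj_on l (C \<union> (G - Z))})"
  (is "even (card ?S)")
proof (rule even_card_involution)
  show "finite ?S"
    using finite_G by (rule finite_subset[rotated, OF finite_Pow_iff[THEN iffD2]]) auto
  let ?swap = "\<lambda>Z. (Z - p1_fibre) \<union> (p1_fibre - Z)"
  show "?swap Z \<in> ?S \<and> ?swap Z \<noteq> Z \<and> ?swap (?swap Z) = Z" if "Z \<in> ?S" for Z
    using swap_p1_fibre[of Z] that by auto
qed

end

context sym_diff_frame
begin

lemma even_card_col_splits_copies:
  assumes agree: "\<forall>e\<in>B1. a e = v e" and copies: "\<forall>q\<in>Q. a q \<in> v ` B1"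
  shows "even (card (col_splits a C G p0 k))"
proof -
  define l where "l e = (if e \<in> B1 then e else (SOME b. b \<in> B1 \<and> a e = v b))" for e
  have l: "l e \<in> B1 \<and> a e = v (l e)" if "e \<in> C \<union> G" for e
  proof (cases "e \<in> B1")
    case True
    then show ?thesis using agree by (simp add: l_def)
  next
    case False
    then have "\<exists>b. b \<in> B1 \<and> a e = v b" using that copies C_subset by blast
    then have "(SOME b. b \<in> B1 \<and> a e = v b) \<in> B1 \<and> a e = v (SOME b. b \<in> B1 \<and> a e = v b)"
      by (rule someI_ex)
    then show ?thesis using False by (simp add: l_def)
  qed
  have indep_iff_inj: "indep_cols a S \<longleftrightarrow> inj_on l S" if S: "S \<subseteq> C \<union> G" for S
  proof -
    have finite: "finite S" using S finite_C finite_G finite_subset by blast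
    have "indep_cols a S = indep_cols (\<lambda>e. v (l e)) S" using l S by (intro indep_cols_cong) blast
    also have "\<dots> \<longleftrightarrow> inj_on l S"
    proof
      assume "indep_cols (\<lambda>e. v (l e)) S"
      then have "inj_on (\<lambda>e. v (l e)) S" using finite by (simp add: indep_cols_iff_independent)
      then show "inj_on l S" by (auto simp: inj_on_def)
    next
      assume inj: "inj_on l S"
      have "l ` S \<subseteq> B1" using l S by blast
      then have "indep_cols v (l ` S)" using indep_cols_subset[OF indep_B1 _ finite_B1] by blast
      then show "indep_cols (\<lambda>e. v (l e)) S" using indep_cols_reindex[OF inj finite, of v] by simp
    qed
    finally show ?thesis .
  qed
  have "indep_cols a (C \<union> Z) \<longleftrightarrow> inj_on l (C \<union> Z)"
      "indep_cols a (C \<union> (G - Z)) \<longleftrightarrow> inj_on l (C \<union> (G - Z))" if "Z \<subseteq> G" for Z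
    using indep_iff_inj[of "C \<union> Z"] indep_iff_inj[of "C \<union> (G - Z)"] that by auto
  then have splits_eq: "col_splits a C G p0 k =
      {Z. Z \<subseteq> G \<and> p0 \<in> Z \<and> card Z = k \<and> inj_on l (C \<union> Z) \<and> inj_on l (C \<union> (G - Z))}"
    unfolding col_splits_def by auto
  interpret labelled_frame v B1 C Q p0 p1 k l
    by unfold_locales (use l in \<open>auto simp: l_def\<close>)
  have "even (card {Z. Z \<subseteq> G \<and> p0 \<in> Z \<and> card Z = k \<and>
      inj_on l (C \<union> Z) \<and> inj_on l (C \<union> (G - Z))})"
    by (rule even_card_inj_splits)
  then show ?thesis using splits_eq by simp
qed

lemma even_card_col_splits_update:
  assumes q: "q \<in> Q" and span: "\<forall>e\<in>(C \<union> G) - {q}. a e \<in> F2.span (v ` B1)"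
    and copies: "\<And>b. b \<in> B1 \<Longrightarrow> even (card (col_splits (a(q := v b)) C G p0 k))"
    and x: "x \<in> F2.span (v ` B1)"
  shows "even (card (col_splits (a(q := x)) C G p0 k))"
proof -
  let ?parity = "\<lambda>x. (of_nat (card (col_splits (a(q := x)) C G p0 k)) :: bit)"
  obtain c where x_eq: "x = (\<Sum>b\<in>B1. scale_bit (c b) (v b))"
    using x in_span_image_iff[OF finite_B1] by blast
  have "?parity (\<Sum>b\<in>T. scale_bit (c b) (v b)) = 0" if "T \<subseteq> B1" for T
    using finite_subset[OF that finite_B1] that
  proof (induction T rule: finite_induct)
    case empty
    show ?case using col_splits_update_zero[OF q, of a] by (simp only: sum.empty card.empty of_nat_0)
  next
    case (insert b T)
    have span_b: "scale_bit (c b) (v b) \<in> F2.span (v ` B1)"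
      using insert.prems by (intro F2.span_scale F2.span_base) auto
    have span_T: "(\<Sum>b\<in>T. scale_bit (c b) (v b)) \<in> F2.span (v ` B1)"
      using insert.prems by (intro F2.span_sum F2.span_scale F2.span_base) auto
    have IH: "?parity (\<Sum>b\<in>T. scale_bit (c b) (v b)) = 0" using insert.IH insert.prems by blast
    have b_part: "?parity (scale_bit (c b) (v b)) = 0"
    proof (cases "c b")
      case zero
      then have "scale_bit (c b) (v b) = 0" by simp
      then show ?thesis using col_splits_update_zero[OF q, of a] by (simp only: card.empty of_nat_0)
    next
      case one
      then show ?thesis using copies[of b] insert.prems by (simp add: of_nat_bit)
    qed
    have "?parity (\<Sum>b\<in>insert b T. scale_bit (c b) (v b)) =
        ?parity (scale_bit (c b) (v b) + (\<Sum>b\<in>T. scale_bit (c b) (v b)))"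
      by (simp only: sum.insert[OF insert.hyps])
    also have "\<dots> = ?parity (scale_bit (c b) (v b)) + ?parity (\<Sum>b\<in>T. scale_bit (c b) (v b))"
      by (rule col_splits_update_add[OF q span span_b span_T])
    finally show ?case by (simp only: IH b_part add_0)
  qed
  then show ?thesis using x_eq by (simp add: of_nat_bit)
qed

lemma even_card_col_splits:
  assumes "\<forall>e\<in>B1. a e = v e" and "\<forall>q\<in>Q. a q \<in> F2.span (v ` B1)"
  shows "even (card (col_splits a C G p0 k))"
  using assms
proof (induction "card {q \<in> Q. a q \<notin> v ` B1}" arbitrary: a rule: less_induct)
  case less
  show ?case
  proof (cases "\<exists>q\<in>Q. a q \<notin> v ` B1")
    case False
    then show ?thesis using even_card_col_splits_copies less.prems(1) by blast
  next
    case True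
    then obtain q where q: "q \<in> Q" "a q \<notin> v ` B1" by blast
    have "q \<notin> B1" using q(1) Q_disjoint by blast
    have span: "\<forall>e\<in>(C \<union> G) - {q}. a e \<in> F2.span (v ` B1)"
    proof
      fix e assume e: "e \<in> (C \<union> G) - {q}"
      show "a e \<in> F2.span (v ` B1)"
      proof (cases "e \<in> B1")
        case True
        then show ?thesis using less.prems(1) F2.span_base[of "v e" "v ` B1"] by simp
      next
        case False
        then have "e \<in> Q" using e C_subset by blast
        then show ?thesis using less.prems(2) by blast
      qed
    qed
    have "even (card (col_splits (a(q := v b)) C G p0 k))" if b: "b \<in> B1" for b
    proof (rule less.hyps)
      have "{q' \<in> Q. (a(q := v b)) q' \<notin> v ` B1} \<subset> {q' \<in> Q. a q' \<notin> v ` B1}"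
        using q b by auto
      then show "card {q' \<in> Q. (a(q := v b)) q' \<notin> v ` B1} < card {q' \<in> Q. a q' \<notin> v ` B1}"
        using finite_Q by (simp add: psubset_card_mono)
      show "\<forall>e\<in>B1. (a(q := v b)) e = v e" using less.prems(1) \<open>q \<notin> B1\<close> by simp
      show "\<forall>q'\<in>Q. (a(q := v b)) q' \<in> F2.span (v ` B1)"
        using less.prems(2) F2.span_base[of "v b" "v ` B1"] b by auto
    qed
    then have "even (card (col_splits (a(q := a q)) C G p0 k))"
      using even_card_col_splits_update[OF q(1) span] less.prems(2) q(1) by blast
    then show ?thesis by simp
  qed
qed

end

context matroid
begin

lemma even_Delta_if_represented:
  assumes rep: "\<forall>S. S \<subseteq> E \<longrightarrow> (indep \<B> S \<longleftrightarrow> indep_cols v S)"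
    and B1: "B1 \<in> \<B>" and B2: "B2 \<in> \<B>" and two: "2 \<le> card (B1 - B2)"
  shows "even (Delta \<B> B1 B2)"
proof -
  have "\<not> card (B1 - B2) \<le> Suc 0" using two by simp
  then obtain p0 p1 where p: "p0 \<in> B1 - B2" "p1 \<in> B1 - B2" "p0 \<noteq> p1"
    using card_le_Suc0_iff_eq[OF finite_Diff[OF base_finite[OF B1]]] by blast
  define C where "C = B1 \<inter> B2"
  define k where "k = card (B1 - B2)"
  have B1_C: "B1 - B1 \<inter> B2 = B1 - B2" by blast
  have indep_B1: "indep_cols v B1" using base_iff_indep_cols[OF rep B1 bases_subset[OF B1]] B1 by simp
  interpret sym_diff_frame v B1 C "B2 - B1" p0 p1 k
    by unfold_locales
      (use B1 B2 p indep_B1 base_finite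
        card_Diff_swap[OF base_finite[OF B2] base_finite[OF B1] bases_card_eq[OF B2 B1]]
       in \<open>auto simp: C_def k_def B1_C\<close>)
  have G_eq: "(B1 \<union> B2) - C = G" by (auto simp: C_def)
  have CG_E: "C \<union> G \<subseteq> E" using bases_subset[OF B1] bases_subset[OF B2] by (auto simp: C_def)
  have "Z \<in> base_splits C G p0 \<longleftrightarrow> Z \<in> col_splits v C G p0 k" for Z
  proof (cases "Z \<subseteq> G \<and> p0 \<in> Z")
    case False
    then show ?thesis by (auto simp: base_splits_def col_splits_def)
  next
    case True
    then have sub: "C \<union> Z \<subseteq> E" "C \<union> (G - Z) \<subseteq> E" using CG_E by auto
    show ?thesis
    proof
      assume Z: "Z \<in> base_splits C G p0"
      then have "card Z = k"
        using card_base_splits[OF B1 B2, of Z p0] unfolding C_def[symmetric] G_eq k_def by blast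
      then show "Z \<in> col_splits v C G p0 k"
        using Z base_iff_indep_cols[OF rep B1] sub by (auto simp: base_splits_def col_splits_def)
    next
      assume Z: "Z \<in> col_splits v C G p0 k"
      then have "card (C \<union> Z) = card B1" "card (C \<union> (G - Z)) = card B1"
        using card_C_Un card_C_Un_compl by (auto simp: col_splits_def)
      then show "Z \<in> base_splits C G p0"
        using Z base_iff_indep_cols[OF rep B1] sub by (auto simp: base_splits_def col_splits_def)
    qed
  qed
  then have "base_splits C G p0 = col_splits v C G p0 k" by blast
  moreover have "\<forall>q \<in> B2 - B1. v q \<in> F2.span (v ` B1)"
    using col_in_span_base[OF rep B1] bases_subset[OF B2] by blast
  then have "even (card (col_splits v C G p0 k))" by (intro even_card_col_splits) auto
  ultimately show ?thesis
    using Delta_eq_card_base_splits[OF B1 B2 p(1)] unfolding C_def[symmetric] G_eq by simp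
qed

lemma Delta_ne_3_if_binary:
  assumes bin: "binary_matroid E \<B>" and B1: "B1 \<in> \<B>" and B2: "B2 \<in> \<B>"
  shows "Delta \<B> B1 B2 \<noteq> 3"
proof (cases "card (B1 - B2) \<le> 1")
  case True
  then show ?thesis using Delta_le_1[OF B1 B2] by simp
next
  case False
  obtain v :: "'a \<Rightarrow> nat \<Rightarrow> bit" where rep: "\<forall>S. S \<subseteq> E \<longrightarrow> (indep \<B> S \<longleftrightarrow> indep_cols v S)"
    using bin unfolding binary_matroid_def representable_over_def lin_indep_cols_iff_indep_cols
    by blast
  have "even (Delta \<B> B1 B2)" using even_Delta_if_represented[OF rep B1 B2] False by simp
  then show ?thesis by presburger
qed

end

section \<open>Matroids without Delta = 3 are binary\<close>

context matroid
begin

abbreviation base_matrix :: "'a set \<Rightarrow> 'a \<Rightarrow> 'a \<Rightarrow> bit" where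
  "base_matrix B \<equiv> fund_matrix (\<lambda>S. S \<in> \<B>) B"

lemma indep_cols_base_matrix_exchange:
  assumes "B \<in> \<B>" "x \<in> B" "y \<notin> B"
  shows "indep_cols (base_matrix B) (insert y (B - {x})) \<longleftrightarrow> insert y (B - {x}) \<in> \<B>"
  using indep_cols_exchange_unit_vec[OF base_finite[OF assms(1)] assms(2,3), of "base_matrix B"]
    fund_matrix_entry[OF assms(3,2)]
  by (simp add: fund_matrix_base_col fund_matrix_outside)

lemma exists_exchange_towards:
  assumes B: "B \<in> \<B>" and S: "finite S" "card S = card B" and x: "x \<in> B - S"
    and "S \<in> \<B> \<or> indep_cols (base_matrix B) S"
  shows "\<exists>y\<in>S - B. insert y (B - {x}) \<in> \<B>"
proof (cases "S \<in> \<B>")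
  case True
  then show ?thesis using basis_exchange[OF B True x] by blast
next
  case False
  then have indep: "indep_cols (base_matrix B) S" using assms(5) by simp
  show ?thesis
  proof (rule ccontr)
    assume no: "\<not> ?thesis"
    have "base_matrix B e \<in> F2.span (unit_vec ` (B - {x}))" if e: "e \<in> S" for e
    proof -
      have "base_matrix B e i = 0" if "i \<notin> B - {x}" for i
      proof (cases "i = x")
        case True
        then show ?thesis
          using no e x by (cases "e \<in> B") (auto simp: fund_matrix_def unit_vec_def)
      next
        case False
        then show ?thesis using that by (simp add: fund_matrix_outside)
      qed
      then show ?thesis using span_unit_vecs[of "B - {x}"] base_finite[OF B] by simp
    qed
    then have "card S \<le> card (B - {x})"
      using indep_cols_card_le[OF S(1) _ indep, of "B - {x}" unit_vec] base_finite[OF B] by simp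
    then show False using S(2) x base_finite[OF B] card_gt_0_iff[of B] by auto
  qed
qed

lemma indep_cols_base_matrix_pivot:
  assumes B: "B \<in> \<B>" and x: "x \<in> B" and y: "y \<notin> B" "insert y (B - {x}) \<in> \<B>"
    and S: "finite S"
  shows "indep_cols (base_matrix B) S \<longleftrightarrow>
    indep_cols (fund_matrix (indep_cols (base_matrix B)) (insert y (B - {x}))) S"
proof (rule indep_cols_iff_fund_matrix)
  have fin: "finite B" using base_finite[OF B] .
  show indep: "indep_cols (base_matrix B) (insert y (B - {x}))"
    using indep_cols_base_matrix_exchange[OF B x y(1)] y(2) by simp
  show fin2: "finite (insert y (B - {x}))" using fin by simp
  have "card (insert y (B - {x})) = card B" using bases_card_eq[OF y(2) B] .
  then show "\<forall>e\<in>S. base_matrix B e \<in> F2.span (base_matrix B ` insert y (B - {x}))"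
    using in_span_if_full_rank[OF fin _ fin2 indep] by (simp add: fund_matrix_outside)
qed (use S in simp)

lemma base_matrix_pivot_agree:
  assumes B: "B \<in> \<B>" and x: "x \<in> B" and y: "y \<notin> B" "insert y (B - {x}) \<in> \<B>"
    and e: "e \<in> E"
    and near: "\<And>D. D \<subseteq> E \<Longrightarrow> card D = card B \<Longrightarrow> card (D - B) \<le> 2 \<Longrightarrow>
      D \<in> \<B> \<longleftrightarrow> indep_cols (base_matrix B) D"
  shows "base_matrix (insert y (B - {x})) e =
    fund_matrix (indep_cols (base_matrix B)) (insert y (B - {x})) e"
proof (cases "e \<in> insert y (B - {x})")
  case True
  then show ?thesis by (simp add: fund_matrix_base_col)
next
  case False
  let ?B2 = "insert y (B - {x})"
  have same: "insert e (?B2 - {b}) \<in> \<B> \<longleftrightarrow> indep_cols (base_matrix B) (insert e (?B2 - {b}))"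
    if b: "b \<in> ?B2" for b
  proof (rule near)
    show "insert e (?B2 - {b}) \<subseteq> E" using b e bases_subset[OF y(2)] by blast
    have "card (?B2 - {b}) = card B - 1" using b base_finite[OF y(2)] bases_card_eq[OF y(2) B] by simp
    moreover have "card B > 0" using x base_finite[OF B] card_gt_0_iff by blast
    ultimately show "card (insert e (?B2 - {b})) = card B" using False base_finite[OF y(2)] by simp
    have "insert e (?B2 - {b}) - B \<subseteq> {e, y}" by blast
    then have "card (insert e (?B2 - {b}) - B) \<le> card {e, y}" by (rule card_mono[rotated]) simp
    also have "\<dots> \<le> 2" by (simp add: card_insert_if)
    finally show "card (insert e (?B2 - {b}) - B) \<le> 2" .
  qed
  show ?thesis
  proof
    fix b
    show "base_matrix ?B2 e b = fund_matrix (indep_cols (base_matrix B)) ?B2 e b"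
      using same[of b] by (cases "b \<in> ?B2") (simp_all add: fund_matrix_entry[OF False] fund_matrix_outside)
  qed
qed

lemma base_iff_indep_base_matrix_near:
  assumes B: "B \<in> \<B>" and S: "finite S" "card S = card B" "card (S - B) \<le> 1"
  shows "S \<in> \<B> \<longleftrightarrow> indep_cols (base_matrix B) S"
proof -
  have fin: "finite B" using base_finite[OF B] .
  have card_BS: "card (B - S) = card (S - B)" using card_Diff_swap[OF fin S(1) S(2)[symmetric]] .
  consider "card (S - B) = 0" | "card (S - B) = 1" using S(3) by linarith
  then show ?thesis
  proof cases
    case 1
    moreover have "card (B - S) = 0" using 1 card_BS by simp
    ultimately have "S - B = {}" "B - S = {}" using fin S(1) by simp_all
    then have "S = B" by blast
    moreover have "indep_cols (base_matrix B) B"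
      using indep_cols_unit_vecs[OF _ fin] by (simp add: fund_matrix_base_col)
    ultimately show ?thesis using B by simp
  next
    case 2
    then obtain x y where "B - S = {x}" "S - B = {y}" using card_BS by (metis card_1_singletonE)
    then have "S = insert y (B - {x})" "x \<in> B" "y \<notin> B" by auto
    then show ?thesis using indep_cols_base_matrix_exchange[OF B] by simp
  qed
qed

end

lemma binary_if_indep_cols_finite_rows:
  assumes fin: "finite B" and outside: "\<forall>e i. i \<notin> B \<longrightarrow> w e i = 0"
    and rep: "\<forall>S. S \<subseteq> E \<longrightarrow> (indep \<B> S \<longleftrightarrow> indep_cols w S)"
  shows "binary_matroid E \<B>"
proof -
  obtain h where h: "bij_betw h {0..<card B} B" using ex_bij_betw_nat_finite[OF fin] by blast
  define v where "v e i = (if i < card B then w e (h i) else 0)" for e i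
  have "(\<forall>i. (\<Sum>e\<in>S. c e * v e i) = 0) \<longleftrightarrow> (\<forall>j. (\<Sum>e\<in>S. c e * w e j) = 0)" for S c
  proof
    assume v0: "\<forall>i. (\<Sum>e\<in>S. c e * v e i) = 0"
    show "\<forall>j. (\<Sum>e\<in>S. c e * w e j) = 0"
    proof
      fix j
      show "(\<Sum>e\<in>S. c e * w e j) = 0"
      proof (cases "j \<in> B")
        case True
        then have "j \<in> h ` {0..<card B}" using h by (simp add: bij_betw_def)
        then obtain i where "i < card B" "h i = j" by auto
        then show ?thesis using v0[rule_format, of i] by (simp add: v_def)
      qed (simp add: outside)
    qed
  next
    assume w0: "\<forall>j. (\<Sum>e\<in>S. c e * w e j) = 0"
    show "\<forall>i. (\<Sum>e\<in>S. c e * v e i) = 0"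
    proof
      fix i
      show "(\<Sum>e\<in>S. c e * v e i) = 0" using w0 by (cases "i < card B") (simp_all add: v_def)
    qed
  qed
  then have "lin_indep_cols v S = indep_cols w S" for S
    by (simp add: lin_indep_cols_iff_indep_cols indep_cols_def)
  moreover have "\<forall>e i. card B \<le> i \<longrightarrow> v e i = 0" by (simp add: v_def)
  ultimately show ?thesis
    using rep unfolding binary_matroid_def representable_over_def
    by (intro exI[of _ "card B"] exI[of _ v]) simp
qed

locale matroid_without_Delta_3 = matroid +
  assumes Delta_ne_3: "\<And>B1 B2. B1 \<in> \<B> \<Longrightarrow> B2 \<in> \<B> \<Longrightarrow> Delta \<B> B1 B2 \<noteq> 3"
begin

(* The right-hand side is the 2 x 2 minor of the fundamental matrix of insert x1 (insert x2 C)
   on rows x1, x2 and columns y1, y2. *)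
lemma base_iff_two_exchange_det:
  assumes distinct: "distinct [x1, x2, y1, y2]" and C: "{x1, x2, y1, y2} \<inter> C = {}"
    and B: "insert x1 (insert x2 C) \<in> \<B>" and m11: "insert x2 (insert y1 C) \<in> \<B>"
  shows "insert y1 (insert y2 C) \<in> \<B> \<longleftrightarrow>
    of_bool (insert x1 (insert y2 C) \<in> \<B>) +
      of_bool (insert x2 (insert y2 C) \<in> \<B>) * of_bool (insert x1 (insert y1 C) \<in> \<B>) = (1::bit)"
    (is "?S \<longleftrightarrow> of_bool ?m22 + of_bool ?m12 * of_bool ?m21 = 1")
proof
  assume S: ?S
  have "\<not> (?m22 \<and> ?m12 \<and> ?m21)"
    using Delta_eq_3[OF distinct C B S] Delta_ne_3[OF B S] m11 by blast
  moreover have "?m12 \<and> ?m21" if "\<not> ?m22"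
  proof
    show ?m12
      using exchange_pair[OF S B] that distinct C by auto
    show ?m21
      using exchange_pair[OF B[unfolded insert_commute[of x1]] S] that distinct C
      by (auto simp: insert_commute)
  qed
  ultimately show "of_bool ?m22 + of_bool ?m12 * of_bool ?m21 = (1::bit)"
    by (cases ?m22) auto
next
  assume det: "of_bool ?m22 + of_bool ?m12 * of_bool ?m21 = (1::bit)"
  then consider "?m22" "\<not> ?m12" | "?m22" "?m12" "\<not> ?m21" | "\<not> ?m22" "?m12" "?m21"
    by (cases ?m22; cases ?m12; cases ?m21) auto
  then show ?S
  proof cases
    case 1
    then show ?thesis using exchange_pair[OF 1(1) m11] distinct C by auto
  next
    case 2
    then show ?thesis
      using exchange_pair[OF m11 2(1)] distinct C by (auto simp: insert_commute)
  next
    case 3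
    then show ?thesis using exchange_pair[OF 3(2,3)] distinct C by auto
  qed
qed

lemma base_iff_indep_pivot_dist2:
  assumes B: "B \<in> \<B>" and S: "finite S" "card S = card B" "card (S - B) = 2"
    and x1: "x1 \<in> B - S" and y1: "y1 \<in> S - B" and B2: "insert y1 (B - {x1}) \<in> \<B>"
  shows "S \<in> \<B> \<longleftrightarrow> indep_cols (fund_matrix (indep_cols (base_matrix B)) (insert y1 (B - {x1}))) S"
proof -
  let ?w = "base_matrix B" and ?B2 = "insert y1 (B - {x1})"
  have fin: "finite B" using base_finite[OF B] .
  have "card (B - S) = 2" using card_Diff_swap[OF S(1) fin S(2)] S(3) by simp
  then have "card ((B - S) - {x1}) = 1" "card ((S - B) - {y1}) = 1" using x1 y1 S(3) by simp_all
  then obtain x2 y2 where x2: "(B - S) - {x1} = {x2}" and y2: "(S - B) - {y1} = {y2}"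
    by (meson card_1_singletonE)
  define C where "C = B \<inter> S"
  have B_eq: "B = insert x1 (insert x2 C)" and S_eq: "S = insert y1 (insert y2 C)"
    using x1 y1 x2 y2 by (auto simp: C_def)
  have distinct: "distinct [x1, x2, y1, y2]" and C_disj: "{x1, x2, y1, y2} \<inter> C = {}"
    using x1 y1 x2 y2 by (auto simp: C_def)
  have B2_eq: "?B2 = insert x2 (insert y1 C)" using B_eq distinct C_disj by auto
  have "x2 \<in> B" "y2 \<notin> B" using x2 y2 by auto
  have entry: "?w e b = of_bool (insert e (B - {b}) \<in> \<B>)" if "e \<notin> B" "b \<in> B" for e b
    using fund_matrix_entry[OF that] .
  have "indep_cols (fund_matrix (indep_cols ?w) ?B2) S \<longleftrightarrow> fund_matrix (indep_cols ?w) ?B2 y2 x2 \<noteq> 0"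
  proof -
    have "S = insert y2 (?B2 - {x2})" using B2_eq S_eq distinct C_disj by auto
    moreover have "x2 \<in> ?B2" "y2 \<notin> ?B2" using B2_eq distinct C_disj by auto
    ultimately show ?thesis
      using indep_cols_exchange_unit_vec[of ?B2 x2 y2 "fund_matrix (indep_cols ?w) ?B2"] fin
      by (simp add: fund_matrix_base_col fund_matrix_outside)
  qed
  also have "fund_matrix (indep_cols ?w) ?B2 y2 x2 = ?w y2 x2 + ?w y2 x1 * ?w y1 x2"
  proof (rule fund_matrix_pivot[OF fin])
    show "\<forall>b\<in>B. ?w b = unit_vec b" by (simp add: fund_matrix_base_col)
    show "\<forall>e i. i \<notin> B \<longrightarrow> ?w e i = 0" by (simp add: fund_matrix_outside)
    show "?w y1 x1 = 1" using entry[of y1 x1] x1 y1 B2 by simp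
  qed (use x1 y1 x2 y2 \<open>x2 \<in> B\<close> \<open>y2 \<notin> B\<close> in auto)
  also have "\<dots> = of_bool (insert x1 (insert y2 C) \<in> \<B>) +
      of_bool (insert x2 (insert y2 C) \<in> \<B>) * of_bool (insert x1 (insert y1 C) \<in> \<B>)"
  proof -
    have "insert y2 (B - {x2}) = insert x1 (insert y2 C)" "insert y2 (B - {x1}) = insert x2 (insert y2 C)"
      "insert y1 (B - {x2}) = insert x1 (insert y1 C)"
      using B_eq distinct C_disj by auto
    then show ?thesis
      using entry[of y2 x2] entry[of y2 x1] entry[of y1 x2] \<open>x2 \<in> B\<close> \<open>y2 \<notin> B\<close> x1 y1
      by simp
  qed
  finally show ?thesis
    using base_iff_two_exchange_det[OF distinct C_disj _ B2[unfolded B2_eq]] B B_eq S_eq by simp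
qed

theorem base_iff_indep_base_matrix:
  assumes "B \<in> \<B>" "S \<subseteq> E" "card S = card B"
  shows "S \<in> \<B> \<longleftrightarrow> indep_cols (base_matrix B) S"
  using assms
proof (induction "card (S - B)" arbitrary: B S rule: less_induct)
  case less
  have fin: "finite B" "finite S" using base_finite less.prems ground_finite finite_subset by auto
  show ?case
  proof (cases "card (S - B) \<le> 1")
    case True
    then show ?thesis using base_iff_indep_base_matrix_near less.prems(1,3) fin(2) by blast
  next
    case far: False
    show ?thesis
    proof (cases "S \<in> \<B> \<or> indep_cols (base_matrix B) S")
      case True
      have "card (B - S) = card (S - B)" using card_Diff_swap[OF fin less.prems(3)[symmetric]] .
      then have "B - S \<noteq> {}" using far by (metis card.empty le0)
      then obtain x1 where x1: "x1 \<in> B - S" by blast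
      obtain y1 where y1: "y1 \<in> S - B" and B2: "insert y1 (B - {x1}) \<in> \<B>"
        using exists_exchange_towards[OF less.prems(1) fin(2) less.prems(3) x1 True] by blast
      let ?B2 = "insert y1 (B - {x1})"
      have "S - ?B2 = (S - B) - {y1}" using x1 y1 by auto
      then have "card (S - ?B2) < card (S - B)" using far y1 fin by simp
      then have IH: "S \<in> \<B> \<longleftrightarrow> indep_cols (base_matrix ?B2) S"
        using less.hyps[OF _ B2 less.prems(2)] less.prems(3) bases_card_eq[OF B2 less.prems(1)]
        by simp
      have pivot: "indep_cols (base_matrix B) S \<longleftrightarrow>
          indep_cols (fund_matrix (indep_cols (base_matrix B)) ?B2) S"
        using indep_cols_base_matrix_pivot[OF less.prems(1) _ _ B2 fin(2)] x1 y1 by blast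
      show ?thesis
      proof (cases "card (S - B) = 2")
        case True
        then show ?thesis
          using base_iff_indep_pivot_dist2[OF less.prems(1) fin(2) less.prems(3) True x1 y1 B2] pivot
          by simp
      next
        case False
        have "base_matrix ?B2 e = fund_matrix (indep_cols (base_matrix B)) ?B2 e" if "e \<in> S" for e
        proof (rule base_matrix_pivot_agree[OF less.prems(1) _ _ B2])
          show "D \<in> \<B> \<longleftrightarrow> indep_cols (base_matrix B) D"
            if "D \<subseteq> E" "card D = card B" "card (D - B) \<le> 2" for D
            using less.hyps[OF _ less.prems(1) that(1,2)] that(3) far False by simp
        qed (use x1 y1 that less.prems(2) in auto)
        then show ?thesis using IH pivot indep_cols_cong by blast
      qed
    qed blast
  qed
qed

theorem binary: "binary_matroid E \<B>"
proof -
  obtain B where B: "B \<in> \<B>" using bases_nonempty by blast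
  let ?w = "base_matrix B"
  have fin: "finite B" using base_finite[OF B] .
  have units: "\<forall>b\<in>B. ?w b = unit_vec b" and outside: "\<forall>e i. i \<notin> B \<longrightarrow> ?w e i = 0"
    by (simp_all add: fund_matrix_base_col fund_matrix_outside)
  have "indep \<B> S \<longleftrightarrow> indep_cols ?w S" if S: "S \<subseteq> E" for S
  proof
    assume "indep \<B> S"
    then obtain D where D: "D \<in> \<B>" "S \<subseteq> D" unfolding indep_def by blast
    then have "indep_cols ?w D"
      using base_iff_indep_base_matrix[OF B bases_subset[OF D(1)] bases_card_eq[OF D(1) B]] by simp
    then show "indep_cols ?w S" using indep_cols_subset[OF _ D(2) base_finite[OF D(1)]] by blast
  next
    assume indep: "indep_cols ?w S"
    have "finite S" using S ground_finite finite_subset by blast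
    then obtain S' where S': "S \<subseteq> S'" "S' \<subseteq> S \<union> B" "card S' = card B" "indep_cols ?w S'"
      using indep_cols_extend[OF fin _ units outside indep] by blast
    have "S' \<subseteq> E" using S'(2) S bases_subset[OF B] by blast
    then have "S' \<in> \<B>" using base_iff_indep_base_matrix[OF B _ S'(3)] S'(4) by simp
    then show "indep \<B> S" using S'(1) unfolding indep_def by blast
  qed
  then show ?thesis using binary_if_indep_cols_finite_rows[OF fin outside] by blast
qed

end

theorem theorem3p4:
  fixes E :: "'a set" and \<B> :: "'a set set"
  assumes "matroid_bases E \<B>"
  shows "binary_matroid E \<B> \<longleftrightarrow> (\<forall>B1\<in>\<B>. \<forall>B2\<in>\<B>. Delta \<B> B1 B2 \<noteq> 3)"
proof -
  interpret matroid E \<B> using assms by unfold_locales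
  show ?thesis
  proof
    assume "binary_matroid E \<B>"
    then show "\<forall>B1\<in>\<B>. \<forall>B2\<in>\<B>. Delta \<B> B1 B2 \<noteq> 3" using Delta_ne_3_if_binary by blast
  next
    assume "\<forall>B1\<in>\<B>. \<forall>B2\<in>\<B>. Delta \<B> B1 B2 \<noteq> 3"
    then interpret matroid_without_Delta_3 E \<B> by unfold_locales blast
    show "binary_matroid E \<B>" by (rule binary)
  qed
qed

end
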